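(* Let $G$ be an infinite, connected, bipartite graph with vertex classes coloured black and white, such that the coloured graph is quasi-transitive and every black vertex has degree $3$. Let $\phi$ be a local transformation and let $\widetilde G$ be obtained from $G$ by applying $\phi$ at each black vertex (and leaving white vertices unchanged), assumed connected. Then the connective constants $\mu=\mu(G)$ and $\widetilde\mu=\mu(\widetilde G)$ satisfy \[ \mu^{-2}=h(\widetilde\mu^{-1}),\qquad h(x)=x\,g_\phi(x). \]
   Context: All graphs are simple. For a bipartite graph with a colouring $\chi$ of its two classes, the coloured-automorphism group consists of graph automorphisms preserving colours; the coloured graph is quasi-transitive if there is a finite $W\subseteq V$ such that for every vertex $v$ some coloured automorphism $\alpha$ has $\alpha v\in W$. The connective constant of a quasi-transitive graph is $\mu=\lim_n\sigma_n(v)^{1/n}$, $\sigma_n(v)$ the number of $n$-step self-avoiding walks from $v$. Local transformation: a local transformation $\phi$ acts at a degree-$3$ vertex $v$ of a simple graph by replacing $v$ with a finite connected graph (the gadget) $\phi(v)$ having three distinct distinguished outer vertices (ports) $w_1,w_2,w_3$, each port being attached to exactly one of the three edges formerly incident to $v$ (one port per edge). It is required that (i) all gadgets $\phi(v)$ are isomorphic via isomorphisms sending ports to ports, and (ii) some subgroup of the automorphism group of $\phi(v)$ preserves the set $\{w_1,w_2,w_3\}$ and acts transitively on it. Mid-edge convention: each edge $e$ is identified with a point at its middle. Walks may start and end at mid-edges; such a walk is self-avoiding (a SAW) if it visits no vertex and no mid-edge more than once, and its length $|\pi|$ is the number of vertices it visits. Gadget series: for a degree-$3$ vertex $v$ with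 incident edges $e_1,e_2,e_3$, $g(x)=g_\phi(x)=\sum_{\pi}x^{|\pi|}$, where the sum is over all SAWs $\pi$ that start at the mid-edge of $e_1$, end at the mid-edge of $e_2$, and otherwise visit only vertices of the gadget $\phi(v)$. This polynomial does not depend on $v$ nor on the chosen pair of incident edges. *)

theory Defs
  imports Complex_Main
begin

definition simple_graph :: "'a set \<Rightarrow> ('a \<Rightarrow> 'a \<Rightarrow> bool) \<Rightarrow> bool" where
  "simple_graph V E \<longleftrightarrow>
     (\<forall>x y. E x y \<longrightarrow> x \<in> V \<and> y \<in> V) \<and> (\<forall>x y. E x y \<longrightarrow> E y x) \<and> (\<forall>x. \<not> E x x)"

definition graph_connected :: "'a set \<Rightarrow> ('a \<Rightarrow> 'a \<Rightarrow> bool) \<Rightarrow> bool" where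
  "graph_connected V E \<longleftrightarrow> (\<forall>x\<in>V. \<forall>y\<in>V. E\<^sup>*\<^sup>* x y)"

definition nbrs :: "('a \<Rightarrow> 'a \<Rightarrow> bool) \<Rightarrow> 'a \<Rightarrow> 'a set" where
  "nbrs E v = {w. E v w}"

definition locally_finite :: "'a set \<Rightarrow> ('a \<Rightarrow> 'a \<Rightarrow> bool) \<Rightarrow> bool" where
  "locally_finite V E \<longleftrightarrow> (\<forall>v\<in>V. finite (nbrs E v))"

text \<open>Bipartite with colouring chi (True = black, False = white).\<close>
definition bipartite_colouring :: "'a set \<Rightarrow> ('a \<Rightarrow> 'a \<Rightarrow> bool) \<Rightarrow> ('a \<Rightarrow> bool) \<Rightarrow> bool" where
  "bipartite_colouring V E chi \<longleftrightarrow> (\<forall>x y. E x y \<longrightarrow> chi x \<noteq> chi y)"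

definition coloured_automorphism ::
  "'a set \<Rightarrow> ('a \<Rightarrow> 'a \<Rightarrow> bool) \<Rightarrow> ('a \<Rightarrow> bool) \<Rightarrow> ('a \<Rightarrow> 'a) \<Rightarrow> bool" where
  "coloured_automorphism V E chi \<alpha> \<longleftrightarrow>
     bij_betw \<alpha> V V \<and> (\<forall>x\<in>V. \<forall>y\<in>V. E (\<alpha> x) (\<alpha> y) \<longleftrightarrow> E x y) \<and> (\<forall>x\<in>V. chi (\<alpha> x) = chi x)"

definition coloured_quasi_transitive ::
  "'a set \<Rightarrow> ('a \<Rightarrow> 'a \<Rightarrow> bool) \<Rightarrow> ('a \<Rightarrow> bool) \<Rightarrow> bool" where
  "coloured_quasi_transitive V E chi \<longleftrightarrow>
     (\<exists>W. finite W \<and> W \<subseteq> V \<and>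
        (\<forall>v\<in>V. \<exists>\<alpha>. coloured_automorphism V E chi \<alpha> \<and> \<alpha> v \<in> W))"

definition saws :: "'a set \<Rightarrow> ('a \<Rightarrow> 'a \<Rightarrow> bool) \<Rightarrow> nat \<Rightarrow> 'a \<Rightarrow> 'a list set" where
  "saws V E n v = {xs. length xs = Suc n \<and> hd xs = v \<and> set xs \<subseteq> V \<and> distinct xs \<and>
                        (\<forall>i<n. E (xs ! i) (xs ! Suc i))}"

definition sigma :: "'a set \<Rightarrow> ('a \<Rightarrow> 'a \<Rightarrow> bool) \<Rightarrow> nat \<Rightarrow> 'a \<Rightarrow> nat" where
  "sigma V E n v = card (saws V E n v)"

definition has_connective_constant :: "'a set \<Rightarrow> ('a \<Rightarrow> 'a \<Rightarrow> bool) \<Rightarrow> real \<Rightarrow> bool" where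
  "has_connective_constant V E \<mu> \<longleftrightarrow>
     (\<forall>v\<in>V. (\<lambda>n. root n (real (sigma V E n v))) \<longlonglongrightarrow> \<mu>)"

text \<open>A gadget: finite connected simple graph (Vg,Eg) with three distinct ports p 0, p 1, p 2,
  such that the port-set-preserving automorphisms act transitively on the ports.\<close>
definition gadget_automorphism :: "'c set \<Rightarrow> ('c \<Rightarrow> 'c \<Rightarrow> bool) \<Rightarrow> ('c \<Rightarrow> 'c) \<Rightarrow> bool" where
  "gadget_automorphism Vg Eg \<sigma> \<longleftrightarrow>
     bij_betw \<sigma> Vg Vg \<and> (\<forall>x\<in>Vg. \<forall>y\<in>Vg. Eg (\<sigma> x) (\<sigma> y) \<longleftrightarrow> Eg x y)"

definition local_transformation :: "'c set \<Rightarrow> ('c \<Rightarrow> 'c \<Rightarrow> bool) \<Rightarrow> (nat \<Rightarrow> 'c) \<Rightarrow> bool" where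
  "local_transformation Vg Eg p \<longleftrightarrow>
     finite Vg \<and> simple_graph Vg Eg \<and> graph_connected Vg Eg \<and>
     inj_on p {0,1,2} \<and> p ` {0,1,2} \<subseteq> Vg \<and>
     (\<exists>H. (\<forall>\<sigma>\<in>H. gadget_automorphism Vg Eg \<sigma> \<and> \<sigma> ` (p ` {0,1,2}) = p ` {0,1,2}) \<and>
          id \<in> H \<and> (\<forall>\<sigma>\<in>H. \<forall>\<tau>\<in>H. \<sigma> \<circ> \<tau> \<in> H) \<and>
          (\<forall>\<sigma>\<in>H. \<exists>\<tau>\<in>H. \<forall>x\<in>Vg. \<tau> (\<sigma> x) = x) \<and>
          (\<forall>i\<in>{0,1,2}. \<forall>j\<in>{0,1,2}. \<exists>\<sigma>\<in>H. \<sigma> (p i) = p j))"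

text \<open>Graph obtained by replacing every black vertex b by a copy of the gadget; the edge
  from b to its (white) neighbour w is attached to port p (att b w).\<close>
definition tilde_V :: "'a set \<Rightarrow> ('a \<Rightarrow> bool) \<Rightarrow> 'c set \<Rightarrow> ('a + 'a \<times> 'c) set" where
  "tilde_V V chi Vg = Inl ` {w\<in>V. \<not> chi w} \<union> {Inr (b, x) | b x. b \<in> V \<and> chi b \<and> x \<in> Vg}"

fun tilde_E :: "'a set \<Rightarrow> ('a \<Rightarrow> 'a \<Rightarrow> bool) \<Rightarrow> ('a \<Rightarrow> bool) \<Rightarrow> ('c \<Rightarrow> 'c \<Rightarrow> bool) \<Rightarrow>
    (nat \<Rightarrow> 'c) \<Rightarrow> ('a \<Rightarrow> 'a \<Rightarrow> nat) \<Rightarrow> ('a + 'a \<times> 'c) \<Rightarrow> ('a + 'a \<times> 'c) \<Rightarrow> bool" where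
  "tilde_E V E chi Eg p att (Inl u) (Inl w) = False"
| "tilde_E V E chi Eg p att (Inl w) (Inr (b, x)) =
     (w \<in> V \<and> \<not> chi w \<and> b \<in> V \<and> chi b \<and> E b w \<and> x = p (att b w))"
| "tilde_E V E chi Eg p att (Inr (b, x)) (Inl w) =
     (w \<in> V \<and> \<not> chi w \<and> b \<in> V \<and> chi b \<and> E b w \<and> x = p (att b w))"
| "tilde_E V E chi Eg p att (Inr (b, x)) (Inr (c, y)) = (b = c \<and> b \<in> V \<and> chi b \<and> Eg x y)"

text \<open>Gadget series: SAWs from the mid-edge of the edge at port p 0 to the mid-edge of the
  edge at port p 1, visiting otherwise only gadget vertices; such a walk is exactly a
  self-avoiding path in the gadget from p 0 to p 1, and its length is its number of vertices.\<close>
definition gadget_paths :: "'c set \<Rightarrow> ('c \<Rightarrow> 'c \<Rightarrow> bool) \<Rightarrow> (nat \<Rightarrow> 'c) \<Rightarrow> 'c list set" where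
  "gadget_paths Vg Eg p = {xs. xs \<noteq> [] \<and> hd xs = p 0 \<and> last xs = p 1 \<and> set xs \<subseteq> Vg \<and>
        distinct xs \<and> (\<forall>i. Suc i < length xs \<longrightarrow> Eg (xs ! i) (xs ! Suc i))}"

definition gadget_series :: "'c set \<Rightarrow> ('c \<Rightarrow> 'c \<Rightarrow> bool) \<Rightarrow> (nat \<Rightarrow> 'c) \<Rightarrow> real \<Rightarrow> real" where
  "gadget_series Vg Eg p x = (\<Sum>xs\<in>gadget_paths Vg Eg p. x ^ length xs)"

end

(* A self-avoiding walk of G from a white vertex alternates between white and black vertices.
   Replacing every black vertex b of a walk of length 2m by a self-avoiding path through the
   gadget of b, between the ports of the two walk edges at b, injects these walks, weighted by
   x^length, into the walks of the replaced graph with total weight sigma_2m h(x)^m, where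
   h(x) = x g(x). Conversely, cutting a walk of the replaced graph at its white vertices
   recovers such a walk of G, up to a final piece inside one gadget. Hence the walk generating
   function of the replaced graph at x is comparable to sum_m sigma_2m h(x)^m, which is finite
   as soon as mu^2 h(x) < 1; its radius of convergence is therefore the root x_c of
   h(x_c) = mu^-2, and the connective constant of the replaced graph is 1/x_c.

   Both connective constants exist by Hammersley's argument: the maximal walk counts over the
   finitely many orbit representatives are submultiplicative, so Fekete's lemma gives the
   growth rate, and lower bounds spread along edges, because a walk from a neighbour of v
   either extends to a walk from v or splits at v into two walks from v. *)

theory Submission
  imports Defs
begin

section \<open>Self-avoiding walks\<close>

lemma successively_take: "successively P xs \<Longrightarrow> successively P (take k xs)"
  by (metis append_take_drop_id successively_append_iff)

lemma successively_drop: "successively P xs \<Longrightarrow> successively P (drop k xs)"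
  by (metis append_take_drop_id successively_append_iff)

lemma
  assumes "simple_graph V E"
  shows simple_graph_in_verts: "E x y \<Longrightarrow> x \<in> V \<and> y \<in> V"
    and simple_graph_sym: "E x y \<Longrightarrow> E y x"
    and simple_graph_irrefl: "\<not> E x x"
  using assms unfolding simple_graph_def by blast+

lemma locally_finite_nbrs: "locally_finite V E \<Longrightarrow> v \<in> V \<Longrightarrow> finite (nbrs E v)"
  unfolding locally_finite_def by blast

lemma successively_set_subset:
  assumes "simple_graph V E" "successively E xs" "xs \<noteq> []" "hd xs \<in> V"
  shows "set xs \<subseteq> V"
  using assms(2-4)
  by (induction xs rule: induct_list012) (auto dest: simple_graph_in_verts[OF assms(1)])

lemma path_of_rtranclp:
  assumes "E\<^sup>*\<^sup>* a b"
  shows "\<exists>xs. xs \<noteq> [] \<and> hd xs = a \<and> last xs = b \<and> distinct xs \<and> successively E xs"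
  using assms
proof (induction rule: rtranclp_induct)
  case base
  show ?case by (intro exI[of _ "[a]"]) auto
next
  case (step y z)
  then obtain xs where xs: "xs \<noteq> []" "hd xs = a" "last xs = y" "distinct xs" "successively E xs"
    by blast
  show ?case
  proof (cases "z \<in> set xs")
    case True
    then obtain i where i: "i < length xs" "xs ! i = z" by (auto simp: in_set_conv_nth)
    moreover have "last (take (Suc i) xs) = xs ! i" using i by (simp add: take_Suc_conv_app_nth)
    ultimately show ?thesis
      using xs by (intro exI[of _ "take (Suc i) xs"]) (auto simp: successively_take)
  next
    case False
    then show ?thesis
      using xs step by (intro exI[of _ "xs @ [z]"]) (auto simp: successively_append_iff)
  qed
qed

definition saws_avoiding :: "'v set \<Rightarrow> ('v \<Rightarrow> 'v \<Rightarrow> bool) \<Rightarrow> 'v set \<Rightarrow> nat \<Rightarrow> 'v \<Rightarrow> 'v list set" where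
  "saws_avoiding V E B n v = {xs. length xs = Suc n \<and> hd xs = v \<and> set xs \<subseteq> V \<and> distinct xs \<and>
      successively E xs \<and> set xs \<inter> B = {}}"

abbreviation saw_count :: "'v set \<Rightarrow> ('v \<Rightarrow> 'v \<Rightarrow> bool) \<Rightarrow> 'v \<Rightarrow> nat \<Rightarrow> real" where
  "saw_count V E v n \<equiv> real (card (saws_avoiding V E {} n v))"

lemma saws_eq_saws_avoiding: "saws V E n v = saws_avoiding V E {} n v"
  unfolding saws_def saws_avoiding_def successively_conv_nth by auto

lemma saws_avoiding_antimono: "B \<subseteq> B' \<Longrightarrow> saws_avoiding V E B' n v \<subseteq> saws_avoiding V E B n v"
  unfolding saws_avoiding_def by auto

lemma saws_avoiding_empty: "v \<notin> V \<or> v \<in> B \<Longrightarrow> saws_avoiding V E B n v = {}"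
  unfolding saws_avoiding_def by (auto simp: length_Suc_conv)

lemma saws_avoiding_0: "saws_avoiding V E B 0 v = (if v \<in> V \<and> v \<notin> B then {[v]} else {})"
  unfolding saws_avoiding_def by (auto simp: length_Suc_conv)

lemma saws_avoiding_Suc:
  assumes "simple_graph V E" "v \<in> V" "v \<notin> B"
  shows "saws_avoiding V E B (Suc n) v = (\<Union>u\<in>nbrs E v. (#) v ` saws_avoiding V E (insert v B) n u)"
proof (intro equalityI subsetI)
  fix xs assume xs: "xs \<in> saws_avoiding V E B (Suc n) v"
  then obtain r where "xs = v # r" "r \<noteq> []" unfolding saws_avoiding_def by (auto simp: length_Suc_conv)
  with xs show "xs \<in> (\<Union>u\<in>nbrs E v. (#) v ` saws_avoiding V E (insert v B) n u)"
    unfolding saws_avoiding_def nbrs_def by (auto simp: successively_Cons)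
next
  fix xs assume "xs \<in> (\<Union>u\<in>nbrs E v. (#) v ` saws_avoiding V E (insert v B) n u)"
  then obtain u r where "E v u" "r \<in> saws_avoiding V E (insert v B) n u" "xs = v # r"
    unfolding nbrs_def by auto
  with assms(2,3) show "xs \<in> saws_avoiding V E B (Suc n) v"
    unfolding saws_avoiding_def by (auto simp: successively_Cons)
qed

lemma finite_saws_avoiding:
  assumes "simple_graph V E" "locally_finite V E"
  shows "finite (saws_avoiding V E B n v)"
proof (induction n arbitrary: v B)
  case 0
  show ?case by (simp add: saws_avoiding_0)
next
  case (Suc n)
  show ?case
  proof (cases "v \<in> V \<and> v \<notin> B")
    case True
    with True Suc.IH locally_finite_nbrs[OF assms(2)] show ?thesis by (simp add: saws_avoiding_Suc[OF assms(1)])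
  qed (auto simp: saws_avoiding_empty)
qed

lemma card_saws_avoiding_Suc:
  assumes sg: "simple_graph V E" and lf: "locally_finite V E" and v: "v \<in> V" "v \<notin> B"
  shows "card (saws_avoiding V E B (Suc n) v) =
    (\<Sum>u\<in>nbrs E v. card (saws_avoiding V E (insert v B) n u))"
proof -
  have "card (\<Union>u\<in>nbrs E v. (#) v ` saws_avoiding V E (insert v B) n u) =
        (\<Sum>u\<in>nbrs E v. card ((#) v ` saws_avoiding V E (insert v B) n u))"
    using locally_finite_nbrs[OF lf v(1)]
    by (intro card_UN_disjoint) (auto simp: finite_saws_avoiding[OF sg lf], auto simp: saws_avoiding_def)
  also have "\<dots> = (\<Sum>u\<in>nbrs E v. card (saws_avoiding V E (insert v B) n u))"
    by (intro sum.cong refl card_image) auto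
  finally show ?thesis using saws_avoiding_Suc[OF sg v] by simp
qed

lemma card_saws_avoiding_antimono:
  assumes "simple_graph V E" "locally_finite V E" "B \<subseteq> B'"
  shows "card (saws_avoiding V E B' n v) \<le> card (saws_avoiding V E B n v)"
  by (rule card_mono[OF finite_saws_avoiding[OF assms(1,2)] saws_avoiding_antimono[OF assms(3)]])

lemma saws_avoiding_take:
  "xs \<in> saws_avoiding V E B n v \<Longrightarrow> k \<le> n \<Longrightarrow> take (Suc k) xs \<in> saws_avoiding V E B k v"
  unfolding saws_avoiding_def by (auto simp: successively_take dest: in_set_takeD)

lemma saws_avoiding_drop:
  "xs \<in> saws_avoiding V E B n v \<Longrightarrow> k \<le> n \<Longrightarrow> drop k xs \<in> saws_avoiding V E B (n - k) (xs ! k)"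
  unfolding saws_avoiding_def by (auto simp: successively_drop hd_drop_conv_nth dest: in_set_dropD)

lemma saws_avoiding_rev_take:
  assumes "simple_graph V E" "xs \<in> saws_avoiding V E B n v" "k \<le> n"
  shows "rev (take (Suc k) xs) \<in> saws_avoiding V E B k (xs ! k)"
proof -
  let ?ys = "take (Suc k) xs"
  have ys: "?ys \<in> saws_avoiding V E B k v" by (rule saws_avoiding_take[OF assms(2,3)])
  then have "successively (\<lambda>x y. E y x) ?ys"
    using successively_mono[of E ?ys "\<lambda>x y. E y x"] simple_graph_sym[OF assms(1)]
    unfolding saws_avoiding_def by blast
  moreover have "last ?ys = xs ! k"
    using assms(2,3) unfolding saws_avoiding_def by (simp add: take_Suc_conv_app_nth)
  ultimately show ?thesis
    using ys unfolding saws_avoiding_def by (auto simp: hd_rev)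
qed

lemma saw_count_submult:
  assumes sg: "simple_graph V E" and lf: "locally_finite V E"
    and bound: "\<And>u. saw_count V E u n \<le> \<beta>"
  shows "saw_count V E v (m + n) \<le> saw_count V E v m * \<beta>"
proof -
  let ?split = "\<lambda>xs. (take (Suc m) xs, drop m xs)"
  let ?S = "Sigma (saws_avoiding V E {} m v) (\<lambda>ys. saws_avoiding V E {} n (last ys))"
  have sub: "?split ` saws_avoiding V E {} (m + n) v \<subseteq> ?S"
  proof (intro image_subsetI)
    fix xs assume xs: "xs \<in> saws_avoiding V E {} (m + n) v"
    then have "last (take (Suc m) xs) = xs ! m"
      unfolding saws_avoiding_def by (simp add: take_Suc_conv_app_nth)
    with saws_avoiding_take[OF xs, of m] saws_avoiding_drop[OF xs, of m]
    show "?split xs \<in> ?S" by simp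
  qed
  have "inj_on ?split (saws_avoiding V E {} (m + n) v)"
  proof (rule inj_onI)
    fix xs ys assume "?split xs = ?split ys"
    then have "take (Suc m) xs = take (Suc m) ys" "drop (Suc m) xs = drop (Suc m) ys"
      by (auto simp: drop_Suc simp flip: tl_drop)
    then show "xs = ys" by (metis append_take_drop_id)
  qed
  then have "card (saws_avoiding V E {} (m + n) v) = card (?split ` saws_avoiding V E {} (m + n) v)"
    by (simp add: card_image)
  also have "\<dots> \<le> card ?S"
    by (rule card_mono[OF _ sub]) (use finite_saws_avoiding[OF sg lf] in auto)
  also have "card ?S = (\<Sum>ys\<in>saws_avoiding V E {} m v. card (saws_avoiding V E {} n (last ys)))"
    by (rule card_SigmaI) (use finite_saws_avoiding[OF sg lf] in auto)
  finally have "saw_count V E v (m + n) \<le>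
      (\<Sum>ys\<in>saws_avoiding V E {} m v. saw_count V E (last ys) n)"
    by (simp flip: of_nat_sum)
  also have "\<dots> \<le> (\<Sum>ys\<in>saws_avoiding V E {} m v. \<beta>)" by (intro sum_mono bound)
  finally show ?thesis by simp
qed

text \<open>A walk from a neighbour u of v either avoids v, and then v can be prepended, or it
  passes through v, and then it splits at v into two walks from v.\<close>
lemma saw_count_neighbour_le:
  assumes sg: "simple_graph V E" and lf: "locally_finite V E" and uv: "E u v"
  shows "saw_count V E u n \<le>
    saw_count V E v (Suc n) + (\<Sum>k\<le>n. saw_count V E v k * saw_count V E v (n - k))"
proof -
  let ?S = "saws_avoiding V E {} n u" and ?W = "\<lambda>k. saws_avoiding V E {} k v"
  let ?S1 = "{xs\<in>?S. v \<notin> set xs}" and ?S2 = "{xs\<in>?S. v \<in> set xs}"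
  note fin = finite_saws_avoiding[OF sg lf]
  have "(#) v ` ?S1 \<subseteq> ?W (Suc n)"
    using simple_graph_in_verts[OF sg uv] simple_graph_sym[OF sg uv]
    unfolding saws_avoiding_def by (auto simp: successively_Cons)
  then have "card ((#) v ` ?S1) \<le> card (?W (Suc n))" by (rule card_mono[OF fin])
  moreover have "card ((#) v ` ?S1) = card ?S1" by (rule card_image) simp
  ultimately have S1: "card ?S1 \<le> card (?W (Suc n))" by simp
  let ?join = "\<lambda>(a, b). rev a @ tl b"
  have "?S2 \<subseteq> (\<Union>k\<le>n. ?join ` (?W k \<times> ?W (n - k)))"
  proof
    fix xs assume xs: "xs \<in> ?S2"
    then obtain k where k: "k < length xs" "xs ! k = v" by (auto simp: in_set_conv_nth)
    have kn: "k \<le> n" using k xs unfolding saws_avoiding_def by simp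
    have "?join (rev (take (Suc k) xs), drop k xs) = xs"
      by (simp add: tl_drop flip: drop_Suc)
    moreover have "rev (take (Suc k) xs) \<in> ?W k" "drop k xs \<in> ?W (n - k)"
      using saws_avoiding_rev_take[OF sg _ kn] saws_avoiding_drop[OF _ kn] xs k by auto
    ultimately show "xs \<in> (\<Union>k\<le>n. ?join ` (?W k \<times> ?W (n - k)))"
      using kn by (auto intro!: rev_image_eqI)
  qed
  then have "card ?S2 \<le> card (\<Union>k\<le>n. ?join ` (?W k \<times> ?W (n - k)))"
    by (intro card_mono) (auto simp: fin)
  also have "\<dots> \<le> (\<Sum>k\<le>n. card (?join ` (?W k \<times> ?W (n - k))))"
    by (rule card_UN_le) simp
  also have "\<dots> \<le> (\<Sum>k\<le>n. card (?W k) * card (?W (n - k)))"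
    by (intro sum_mono order_trans[OF card_image_le]) (auto simp: fin card_cartesian_product)
  finally have S2: "card ?S2 \<le> (\<Sum>k\<le>n. card (?W k) * card (?W (n - k)))" .
  have "?S = ?S1 \<union> ?S2" by auto
  then have "card ?S \<le> card ?S1 + card ?S2" using card_Un_le[of ?S1 ?S2] by simp
  with S1 S2 have "card ?S \<le> card (?W (Suc n)) + (\<Sum>k\<le>n. card (?W k) * card (?W (n - k)))"
    by linarith
  then have "real (card ?S) \<le> real (card (?W (Suc n)) + (\<Sum>k\<le>n. card (?W k) * card (?W (n - k))))"
    by (simp only: of_nat_le_iff)
  then show ?thesis by simp
qed

lemma saws_avoiding_nonempty:
  assumes sg: "simple_graph V E" and lf: "locally_finite V E" and inf: "infinite V"
    and con: "graph_connected V E" and v: "v \<in> V"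
  shows "saws_avoiding V E {} n v \<noteq> {}"
proof -
  let ?reached = "\<Union>k\<le>n. last ` saws_avoiding V E {} k v"
  have "finite ?reached" using finite_saws_avoiding[OF sg lf] by auto
  then obtain u where u: "u \<in> V" "u \<notin> ?reached"
    using inf by (meson finite_subset subsetI)
  then have "E\<^sup>*\<^sup>* v u" using con v unfolding graph_connected_def by auto
  then obtain ys where ys: "ys \<noteq> []" "hd ys = v" "last ys = u" "distinct ys" "successively E ys"
    using path_of_rtranclp by metis
  have ysaw: "ys \<in> saws_avoiding V E {} (length ys - 1) v"
    using ys successively_set_subset[OF sg ys(5,1)] v unfolding saws_avoiding_def by auto
  show ?thesis
  proof (cases "length ys \<le> Suc n")
    case True
    then have "u \<in> ?reached" using ysaw ys(3) by (intro UN_I[of "length ys - 1"]) auto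
    with u show ?thesis by blast
  next
    case False
    then have "take (Suc n) ys \<in> saws_avoiding V E {} n v" by (intro saws_avoiding_take[OF ysaw]) auto
    then show ?thesis by blast
  qed
qed

lemma automorphism_preserves_path:
  assumes "bij_betw \<alpha> V V" "\<forall>x\<in>V. \<forall>y\<in>V. E (\<alpha> x) (\<alpha> y) \<longleftrightarrow> E x y"
    and "set xs \<subseteq> V" "distinct xs" "successively E xs"
  shows "set (map \<alpha> xs) \<subseteq> V \<and> distinct (map \<alpha> xs) \<and> successively E (map \<alpha> xs)"
proof -
  have "set (map \<alpha> xs) \<subseteq> V" using assms(1,3) by (auto dest: bij_betwE)
  moreover have "distinct (map \<alpha> xs)"
    using assms(3,4) bij_betw_imp_inj_on[OF assms(1)] by (simp add: distinct_map inj_on_subset)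
  moreover have "successively E (map \<alpha> xs)"
    unfolding successively_map using assms(2,3) by (auto intro: successively_mono[OF assms(5)])
  ultimately show ?thesis by blast
qed

lemma card_saws_automorphism_le:
  assumes sg: "simple_graph V E" and lf: "locally_finite V E"
    and aut: "bij_betw \<alpha> V V" "\<forall>x\<in>V. \<forall>y\<in>V. E (\<alpha> x) (\<alpha> y) \<longleftrightarrow> E x y"
  shows "card (saws_avoiding V E {} n v) \<le> card (saws_avoiding V E {} n (\<alpha> v))"
proof -
  have sub: "map \<alpha> ` saws_avoiding V E {} n v \<subseteq> saws_avoiding V E {} n (\<alpha> v)"
  proof (intro image_subsetI)
    fix xs assume "xs \<in> saws_avoiding V E {} n v"
    with automorphism_preserves_path[OF aut, of xs] show "map \<alpha> xs \<in> saws_avoiding V E {} n (\<alpha> v)"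
      unfolding saws_avoiding_def by (cases xs) auto
  qed
  have "inj_on (map \<alpha>) (saws_avoiding V E {} n v)"
  proof (rule inj_onI)
    fix xs ys assume "xs \<in> saws_avoiding V E {} n v" "ys \<in> saws_avoiding V E {} n v"
      and eq: "map \<alpha> xs = map \<alpha> ys"
    then have "inj_on \<alpha> (set xs \<union> set ys)"
      using bij_betw_imp_inj_on[OF aut(1)] unfolding saws_avoiding_def by (auto intro: inj_on_subset)
    with eq show "xs = ys" using inj_on_map_eq_map by blast
  qed
  then have "card (saws_avoiding V E {} n v) = card (map \<alpha> ` saws_avoiding V E {} n v)"
    by (simp add: card_image)
  also have "\<dots> \<le> card (saws_avoiding V E {} n (\<alpha> v))"
    by (rule card_mono[OF finite_saws_avoiding[OF sg lf] sub])
  finally show ?thesis .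
qed

lemma card_saws_automorphism:
  assumes sg: "simple_graph V E" and lf: "locally_finite V E"
    and aut: "bij_betw \<alpha> V V" "\<forall>x\<in>V. \<forall>y\<in>V. E (\<alpha> x) (\<alpha> y) \<longleftrightarrow> E x y" and v: "v \<in> V"
  shows "card (saws_avoiding V E {} n (\<alpha> v)) = card (saws_avoiding V E {} n v)"
proof -
  define \<beta> where "\<beta> = inv_into V \<alpha>"
  have \<beta>: "bij_betw \<beta> V V" unfolding \<beta>_def by (rule bij_betw_inv_into[OF aut(1)])
  have "\<alpha> (\<beta> x) = x" "\<beta> x \<in> V" if "x \<in> V" for x
    unfolding \<beta>_def using aut(1) that by (auto simp: bij_betw_inv_into_right inv_into_into bij_betw_def)
  then have "\<forall>x\<in>V. \<forall>y\<in>V. E (\<beta> x) (\<beta> y) \<longleftrightarrow> E x y"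
    using aut(2) by (metis (no_types, lifting))
  moreover have "\<beta> (\<alpha> v) = v"
    unfolding \<beta>_def using aut(1) v by (simp add: bij_betw_imp_inj_on)
  ultimately show ?thesis
    using card_saws_automorphism_le[OF sg lf \<beta>, of n "\<alpha> v"] card_saws_automorphism_le[OF sg lf aut, of n v]
    by simp
qed

section \<open>Exponential growth of walk counts\<close>

lemma submultiplicative_le_power:
  fixes a :: "nat \<Rightarrow> real"
  assumes a1: "\<And>n. 1 \<le> a n" and sub: "\<And>m n. a (m + n) \<le> a m * a n"
    and k: "0 < k" "a k \<le> b ^ k" and b: "1 \<le> b"
  shows "a n \<le> (\<Sum>r<k. a r) * b ^ n"
proof -
  have a0: "0 \<le> a j" for j using a1[of j] by linarith
  have pow: "a (q * k + r) \<le> a k ^ q * a r" for q r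
  proof (induction q)
    case (Suc q)
    have "a (Suc q * k + r) \<le> a k * a (q * k + r)"
      using sub[of k "q * k + r"] by (simp add: add.assoc)
    also have "\<dots> \<le> a k * (a k ^ q * a r)" using Suc a0 by (intro mult_left_mono)
    finally show ?case by (simp add: algebra_simps)
  qed simp
  define q r where "q = n div k" and "r = n mod k"
  have n: "n = q * k + r" and rk: "r < k" unfolding q_def r_def using k(1) by simp_all
  have "a n \<le> a k ^ q * a r" unfolding n by (rule pow)
  also have "\<dots> \<le> (b ^ k) ^ q * a r" using k(2) a0 by (intro mult_right_mono power_mono) auto
  also have "(b ^ k) ^ q = b ^ (q * k)" by (simp add: power_mult mult.commute)
  also have "b ^ (q * k) * a r \<le> b ^ n * a r"
    using b a0 n by (intro mult_right_mono power_increasing) auto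
  also have "\<dots> \<le> b ^ n * (\<Sum>r<k. a r)"
    using rk a0 b by (intro mult_left_mono member_le_sum) auto
  finally show ?thesis by (simp add: mult.commute)
qed

lemma submultiplicative_growth_rate:
  fixes a :: "nat \<Rightarrow> real"
  assumes a1: "\<And>n. 1 \<le> a n" and sub: "\<And>m n. a (m + n) \<le> a m * a n"
  obtains L where "1 \<le> L" "\<And>n. L ^ n \<le> a n" "\<And>\<epsilon>. 0 < \<epsilon> \<Longrightarrow> \<exists>C. \<forall>n. a n \<le> C * (L + \<epsilon>) ^ n"
proof
  define L where "L = (INF n\<in>{1..}. root n (a n))"
  have root1: "1 \<le> root n (a n)" if "1 \<le> n" for n
    using that a1[of n] by simp
  have bdd: "bdd_below ((\<lambda>n. root n (a n)) ` {1..})"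
    by (rule bdd_belowI[of _ 1]) (auto intro: root1)
  show L1: "1 \<le> L" unfolding L_def by (rule cINF_greatest) (auto simp: a1)
  show "L ^ n \<le> a n" for n
  proof (cases "n = 0")
    case False
    then have "L \<le> root n (a n)" unfolding L_def by (intro cINF_lower[OF bdd]) auto
    then have "L ^ n \<le> root n (a n) ^ n" using L1 by (intro power_mono) auto
    also have "\<dots> = a n" using False a1[of n] by simp
    finally show ?thesis .
  qed (use a1[of 0] in simp)
  fix \<epsilon> :: real assume e: "0 < \<epsilon>"
  then have "(INF n\<in>{1..}. root n (a n)) < L + \<epsilon>" unfolding L_def by simp
  then obtain k where k: "1 \<le> k" "root k (a k) < L + \<epsilon>"
    by (subst (asm) cINF_less_iff[OF _ bdd]) auto
  have "a k = root k (a k) ^ k" using k(1) a1[of k] by simp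
  also have "\<dots> \<le> (L + \<epsilon>) ^ k" using k a1[of k] by (intro power_mono) auto
  finally have "a n \<le> (\<Sum>r<k. a r) * (L + \<epsilon>) ^ n" for n
    using submultiplicative_le_power[OF a1 sub, of k "L + \<epsilon>" n] k(1) L1 e by simp
  then show "\<exists>C. \<forall>n. a n \<le> C * (L + \<epsilon>) ^ n" by blast
qed

lemma exp_dominates_linear:
  fixes a b :: real
  assumes "0 < b" "b < a"
  shows "\<exists>c>0. \<forall>n. c * b ^ n * (real n + 1) \<le> a ^ n"
proof -
  define t where "t = a / b"
  have t1: "1 < t" using assms unfolding t_def by simp
  define c where "c = min 1 (t - 1)"
  have "c * (real n + 1) \<le> t ^ n" for n
  proof -
    have "c \<le> 1" "c \<le> t - 1" unfolding c_def by auto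
    then have "c * (real n + 1) \<le> 1 + real n * (t - 1)"
      using mult_right_mono[of c "t - 1" "real n"] by (simp add: algebra_simps)
    also have "\<dots> \<le> t ^ n" using Bernoulli_inequality[of "t - 1" n] t1 by simp
    finally show ?thesis .
  qed
  then have "c * b ^ n * (real n + 1) \<le> a ^ n" for n
    using assms mult_left_mono[of "c * (real n + 1)" "t ^ n" "b ^ n"]
    unfolding t_def by (simp add: power_divide algebra_simps)
  moreover have "0 < c" using t1 unfolding c_def by simp
  ultimately show ?thesis by blast
qed

lemma convolution_le_middle:
  fixes s :: "nat \<Rightarrow> real"
  assumes nn: "\<And>j. 0 \<le> s j" and sub: "\<And>m j. s (m + j) \<le> s m * (C * K ^ j)"
    and up: "\<And>j. s j \<le> C * K ^ j" and "k \<le> 2 * n"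
  shows "s k * s (2 * n - k) \<le> s n * (C\<^sup>2 * K ^ n)"
proof -
  have large: "s i * s (2 * n - i) \<le> s n * (C\<^sup>2 * K ^ n)" if "n \<le> i" "i \<le> 2 * n" for i
  proof -
    have si: "s i \<le> s n * (C * K ^ (i - n))" using sub[of n "i - n"] that by simp
    then have "s i * s (2 * n - i) \<le> s n * (C * K ^ (i - n)) * (C * K ^ (2 * n - i))"
      using nn up order_trans[OF nn[of i] si] by (intro mult_mono) auto
    also have "\<dots> = s n * (C\<^sup>2 * K ^ (i - n + (2 * n - i)))"
      by (simp add: power_add power2_eq_square algebra_simps)
    finally show ?thesis using that by simp
  qed
  show ?thesis
  proof (cases "n \<le> k")
    case False
    then show ?thesis using large[of "2 * n - k"] assms(4) by (simp add: mult.commute)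
  qed (use large assms(4) in auto)
qed

lemma convolution_bound_le:
  fixes s :: "nat \<Rightarrow> real"
  assumes nn: "\<And>j. 0 \<le> s j" and sub: "\<And>m j. s (m + j) \<le> s m * (C * K ^ j)"
    and up: "\<And>j. s j \<le> C * K ^ j" and C: "1 \<le> C" and K: "1 \<le> K"
  shows "s (Suc (2 * n)) + (\<Sum>k\<le>2 * n. s k * s (2 * n - k)) \<le> 2 * (real n + 1) * C\<^sup>2 * K ^ (n + 1) * s n"
proof -
  have "s (Suc (2 * n)) \<le> s n * (C * K ^ Suc n)" using sub[of n "Suc n"] by (simp add: mult_2)
  also have "\<dots> \<le> s n * (C\<^sup>2 * K ^ (n + 1))"
    using nn C K by (intro mult_left_mono mult_right_mono) (auto simp: power2_eq_square)
  finally have first: "s (Suc (2 * n)) \<le> s n * (C\<^sup>2 * K ^ (n + 1))" .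
  have "(\<Sum>k\<le>2 * n. s k * s (2 * n - k)) \<le> (\<Sum>k\<le>2 * n. s n * (C\<^sup>2 * K ^ (n + 1)))"
  proof (rule sum_mono)
    fix k assume "k \<in> {..2 * n}"
    then have "s k * s (2 * n - k) \<le> s n * (C\<^sup>2 * K ^ n)"
      by (intro convolution_le_middle[OF nn sub up]) simp
    also have "\<dots> \<le> s n * (C\<^sup>2 * K ^ (n + 1))"
      using nn K by (intro mult_left_mono mult_left_mono power_increasing) auto
    finally show "s k * s (2 * n - k) \<le> s n * (C\<^sup>2 * K ^ (n + 1))" .
  qed
  with first show ?thesis by (simp add: algebra_simps)
qed

definition uniform_growth_bound :: "'v set \<Rightarrow> ('v \<Rightarrow> 'v \<Rightarrow> bool) \<Rightarrow> real \<Rightarrow> bool" where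
  "uniform_growth_bound V E \<mu> \<longleftrightarrow>
     (\<forall>\<epsilon>>0. \<exists>C. \<forall>u\<in>V. \<forall>j. saw_count V E u j \<le> C * (\<mu> + \<epsilon>) ^ j)"

definition growth_lower_bound :: "'v set \<Rightarrow> ('v \<Rightarrow> 'v \<Rightarrow> bool) \<Rightarrow> real \<Rightarrow> 'v \<Rightarrow> bool" where
  "growth_lower_bound V E \<mu> v \<longleftrightarrow>
     (\<forall>\<delta>. 0 < \<delta> \<longrightarrow> \<delta> < \<mu> \<longrightarrow> (\<exists>c>0. \<forall>n. c * (\<mu> - \<delta>) ^ n \<le> saw_count V E v n))"

definition near_growth_lower_bound :: "'v set \<Rightarrow> ('v \<Rightarrow> 'v \<Rightarrow> bool) \<Rightarrow> real \<Rightarrow> 'v \<Rightarrow> nat \<Rightarrow> bool" where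
  "near_growth_lower_bound V E \<mu> v r \<longleftrightarrow> (\<forall>\<delta>. 0 < \<delta> \<longrightarrow> \<delta> < \<mu> \<longrightarrow>
     (\<exists>c>0. \<forall>n. \<exists>y\<in>V. (\<exists>k\<le>r. (E ^^ k) y v) \<and> c * (\<mu> - \<delta>) ^ n \<le> saw_count V E y n))"

lemma uniform_growth_boundE:
  assumes "uniform_growth_bound V E \<mu>" "0 < \<epsilon>" "0 \<le> \<mu>"
  obtains C where "1 \<le> C" "\<And>u j. saw_count V E u j \<le> C * (\<mu> + \<epsilon>) ^ j"
proof -
  obtain C0 where C0: "\<And>u j. u \<in> V \<Longrightarrow> saw_count V E u j \<le> C0 * (\<mu> + \<epsilon>) ^ j"
    using assms(1,2) unfolding uniform_growth_bound_def by blast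
  have "saw_count V E u j \<le> max C0 1 * (\<mu> + \<epsilon>) ^ j" for u j
  proof (cases "u \<in> V")
    case True
    have "C0 * (\<mu> + \<epsilon>) ^ j \<le> max C0 1 * (\<mu> + \<epsilon>) ^ j"
      using assms(2,3) by (intro mult_right_mono) auto
    with C0[OF True, of j] show ?thesis by linarith
  qed (use assms(2,3) in \<open>simp add: saws_avoiding_empty\<close>)
  then show thesis by (intro that[of "max C0 1"]) auto
qed

lemma eventually_root_gt:
  fixes f :: "nat \<Rightarrow> real"
  assumes "0 < c" "0 < b" "a < b" "\<And>n. c * b ^ n \<le> f n"
  shows "eventually (\<lambda>n. a < root n (f n)) sequentially"
proof -
  have "(\<lambda>n. root n c * b) \<longlonglongrightarrow> 1 * b"
    by (intro tendsto_mult_right LIMSEQ_root_const assms(1))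
  then have "eventually (\<lambda>n. a < root n c * b) sequentially"
    using assms(3) by (intro order_tendstoD(1)) auto
  then show ?thesis
  proof (rule eventually_mono[OF eventually_conj[OF _ eventually_ge_at_top[of 1]]])
    fix n :: nat assume n: "a < root n c * b \<and> 1 \<le> n"
    have "root n c * b = root n (c * b ^ n)"
      using n assms(2) by (simp add: real_root_mult real_root_power_cancel)
    also have "\<dots> \<le> root n (f n)" using n assms(4) by simp
    finally show "a < root n (f n)" using n by simp
  qed
qed

lemma eventually_root_lt:
  fixes f :: "nat \<Rightarrow> real"
  assumes "0 < C" "0 < b" "b < a" "\<And>n. f n \<le> C * b ^ n"
  shows "eventually (\<lambda>n. root n (f n) < a) sequentially"
proof -
  have "(\<lambda>n. root n C * b) \<longlonglongrightarrow> 1 * b"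
    by (intro tendsto_mult_right LIMSEQ_root_const assms(1))
  then have "eventually (\<lambda>n. root n C * b < a) sequentially"
    using assms(3) by (intro order_tendstoD(2)) auto
  then show ?thesis
  proof (rule eventually_mono[OF eventually_conj[OF _ eventually_ge_at_top[of 1]]])
    fix n :: nat assume n: "root n C * b < a \<and> 1 \<le> n"
    have "root n (f n) \<le> root n (C * b ^ n)" using n assms(4) by simp
    also have "\<dots> = root n C * b"
      using n assms(2) by (simp add: real_root_mult real_root_power_cancel)
    finally show "root n (f n) < a" using n by simp
  qed
qed

lemma has_connective_constant_if_growth_bounds:
  assumes mu: "1 \<le> \<mu>" and up: "uniform_growth_bound V E \<mu>"
    and low: "\<forall>v\<in>V. growth_lower_bound V E \<mu> v"
  shows "has_connective_constant V E \<mu>"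
  unfolding has_connective_constant_def sigma_def saws_eq_saws_avoiding
proof (intro ballI order_tendstoI)
  fix v a assume v: "v \<in> V"
  show "eventually (\<lambda>n. a < root n (saw_count V E v n)) sequentially" if "a < \<mu>"
  proof -
    define \<delta> where "\<delta> = min ((\<mu> - a) / 2) (\<mu> / 2)"
    have \<delta>: "0 < \<delta>" "\<delta> < \<mu>" "a < \<mu> - \<delta>"
      using that mu unfolding \<delta>_def by (auto simp: min_def field_simps)
    then obtain c where "c > 0" "\<And>n. c * (\<mu> - \<delta>) ^ n \<le> saw_count V E v n"
      using low v unfolding growth_lower_bound_def by blast
    with \<delta> show ?thesis by (intro eventually_root_gt[of c]) auto
  qed
  show "eventually (\<lambda>n. root n (saw_count V E v n) < a) sequentially" if "\<mu> < a"
  proof -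
    have "0 < (a - \<mu>) / 2" "0 \<le> \<mu>" using that mu by auto
    then obtain C where "1 \<le> C" "\<And>u j. saw_count V E u j \<le> C * (\<mu> + (a - \<mu>) / 2) ^ j"
      using uniform_growth_boundE[OF up] by blast
    with that mu show ?thesis by (intro eventually_root_lt[of C "\<mu> + (a - \<mu>) / 2"]) (auto simp: field_simps)
  qed
qed

lemma near_witness_transfer:
  assumes sg: "simple_graph V E" and lf: "locally_finite V E"
    and C: "1 \<le> C" "1 \<le> K" "\<And>u j. saw_count V E u j \<le> C * K ^ j"
    and y: "y \<in> V" "(E ^^ k) y v" "k \<le> Suc r"
  shows "\<exists>y'\<in>V. (\<exists>k\<le>r. (E ^^ k) y' v) \<and>
    saw_count V E y (2 * n) \<le> 2 * (real n + 1) * C\<^sup>2 * K ^ (n + 1) * saw_count V E y' n"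
proof (cases "k \<le> r")
  case True
  have "saw_count V E y (2 * n) \<le> saw_count V E y n * (C * K ^ n)"
    using saw_count_submult[OF sg lf, where n=n and \<beta>="C * K ^ n" and v=y and m=n] C(3)
    by (simp add: mult_2)
  also have "\<dots> \<le> saw_count V E y n * (2 * (real n + 1) * C\<^sup>2 * K ^ (n + 1))"
  proof (intro mult_left_mono)
    have "C * K ^ n \<le> C\<^sup>2 * K ^ (n + 1)"
      using C(1,2) by (intro mult_mono) (auto simp: power2_eq_square power_increasing)
    also have "\<dots> \<le> 2 * (real n + 1) * C\<^sup>2 * K ^ (n + 1)"
      using C(1,2) mult_right_mono[of 1 "2 * (real n + 1)" "C\<^sup>2 * K ^ (n + 1)"]
      by (simp add: algebra_simps)
    finally show "C * K ^ n \<le> 2 * (real n + 1) * C\<^sup>2 * K ^ (n + 1)" .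
  qed simp
  finally show ?thesis using y True by (auto simp: mult.commute)
next
  case False
  with y obtain y' where y': "E y y'" "(E ^^ r) y' v" by (metis le_SucE relpowp_Suc_D2)
  have "saw_count V E y (2 * n) \<le>
      saw_count V E y' (Suc (2 * n)) + (\<Sum>k\<le>2 * n. saw_count V E y' k * saw_count V E y' (2 * n - k))"
    by (rule saw_count_neighbour_le[OF sg lf y'(1)])
  also have "\<dots> \<le> 2 * (real n + 1) * C\<^sup>2 * K ^ (n + 1) * saw_count V E y' n"
    by (rule convolution_bound_le[OF _ saw_count_submult[OF sg lf C(3)] C(3) C(1,2)]) simp
  finally show ?thesis using y'(2) simple_graph_in_verts[OF sg y'(1)] by blast
qed

text \<open>The constant \<delta>/12 is chosen so that (\<mu> - \<delta>/12)^2 \<ge> (\<mu> - \<delta>/2) (\<mu> + \<delta>/12): the squared lower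
  rate at length 2n beats the upper rate \<mu> + \<delta>/12 lost in halving the length.\<close>
lemma growth_rate_from_doubled_length:
  fixes \<mu> \<delta> c0 c1 C s :: real
  assumes \<delta>: "0 < \<delta>" "\<delta> < \<mu>" and c0: "c0 * (\<mu> - \<delta>) ^ n * (real n + 1) \<le> (\<mu> - \<delta> / 2) ^ n"
    and c1: "0 < c1" and C: "1 \<le> C"
    and le: "c1 * (\<mu> - \<delta> / 12) ^ (2 * n) \<le> 2 * (real n + 1) * C\<^sup>2 * (\<mu> + \<delta> / 12) ^ (n + 1) * s"
  shows "c1 * c0 / (2 * C\<^sup>2 * (\<mu> + \<delta> / 12)) * (\<mu> - \<delta>) ^ n \<le> s"
proof -
  define K where "K = \<mu> + \<delta> / 12"
  have K: "0 < K" using \<delta> unfolding K_def by simp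
  have "(\<mu> - \<delta> / 2) * K \<le> (\<mu> - \<delta> / 12)\<^sup>2"
    using \<delta> unfolding K_def by (simp add: power2_eq_square field_simps)
  then have "(\<mu> - \<delta> / 2) ^ n * K ^ n \<le> (\<mu> - \<delta> / 12) ^ (2 * n)"
    using \<delta> K by (simp add: power_mult power_mult_distrib[symmetric] power_mono)
  moreover have "c0 * (\<mu> - \<delta>) ^ n * (real n + 1) * K ^ n \<le> (\<mu> - \<delta> / 2) ^ n * K ^ n"
    using K by (intro mult_right_mono[OF c0]) simp
  ultimately have "c1 * (c0 * (\<mu> - \<delta>) ^ n * (real n + 1) * K ^ n) \<le> c1 * (\<mu> - \<delta> / 12) ^ (2 * n)"
    using c1 by (intro mult_left_mono) auto
  also have "\<dots> \<le> (2 * C\<^sup>2 * K * s) * ((real n + 1) * K ^ n)"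
    using le unfolding K_def by (simp add: algebra_simps)
  finally have "(c1 * c0 * (\<mu> - \<delta>) ^ n) * ((real n + 1) * K ^ n) \<le> (2 * C\<^sup>2 * K * s) * ((real n + 1) * K ^ n)"
    by (simp add: algebra_simps)
  then have "c1 * c0 * (\<mu> - \<delta>) ^ n \<le> 2 * C\<^sup>2 * K * s"
    using K by (simp add: mult_le_cancel_right_pos)
  then show ?thesis
    using C K unfolding K_def[symmetric] by (simp add: field_simps)
qed

lemma near_growth_lower_bound_step:
  assumes sg: "simple_graph V E" and lf: "locally_finite V E" and mu: "1 \<le> \<mu>"
    and up: "uniform_growth_bound V E \<mu>" and near: "near_growth_lower_bound V E \<mu> v (Suc r)"
  shows "near_growth_lower_bound V E \<mu> v r"
  unfolding near_growth_lower_bound_def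
proof (intro allI impI)
  fix \<delta> :: real assume \<delta>: "0 < \<delta>" "\<delta> < \<mu>"
  define K where "K = \<mu> + \<delta> / 12"
  have "0 < \<delta> / 12" "\<delta> / 12 < \<mu>" using \<delta> by auto
  then obtain c1 where c1: "0 < c1"
    "\<And>n. \<exists>y\<in>V. (\<exists>k\<le>Suc r. (E ^^ k) y v) \<and> c1 * (\<mu> - \<delta> / 12) ^ n \<le> saw_count V E y n"
    using near unfolding near_growth_lower_bound_def by blast
  have "0 < \<delta> / 12" "0 \<le> \<mu>" using \<delta> by auto
  then obtain C where C: "1 \<le> C" "\<And>u j. saw_count V E u j \<le> C * K ^ j"
    unfolding K_def using uniform_growth_boundE[OF up] by blast
  have K: "1 \<le> K" using mu \<delta> unfolding K_def by simp
  obtain c0 where c0: "0 < c0" "\<And>n. c0 * (\<mu> - \<delta>) ^ n * (real n + 1) \<le> (\<mu> - \<delta> / 2) ^ n"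
    using exp_dominates_linear[of "\<mu> - \<delta>" "\<mu> - \<delta> / 2"] \<delta> by auto
  have "\<exists>y'\<in>V. (\<exists>k\<le>r. (E ^^ k) y' v) \<and> c1 * c0 / (2 * C\<^sup>2 * K) * (\<mu> - \<delta>) ^ n \<le> saw_count V E y' n"
    for n
  proof -
    obtain y k where y: "y \<in> V" "k \<le> Suc r" "(E ^^ k) y v"
      and low: "c1 * (\<mu> - \<delta> / 12) ^ (2 * n) \<le> saw_count V E y (2 * n)"
      using c1(2)[of "2 * n"] by blast
    obtain y' where y': "y' \<in> V" "\<exists>k\<le>r. (E ^^ k) y' v"
      and up: "saw_count V E y (2 * n) \<le> 2 * (real n + 1) * C\<^sup>2 * K ^ (n + 1) * saw_count V E y' n"
      using near_witness_transfer[OF sg lf C(1) K C(2) y(1,3,2)] by blast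
    have "c1 * c0 / (2 * C\<^sup>2 * K) * (\<mu> - \<delta>) ^ n \<le> saw_count V E y' n"
      unfolding K_def using low up
      by (intro growth_rate_from_doubled_length[OF \<delta> c0(2) c1(1) C(1)]) (simp add: K_def)
    with y' show ?thesis by blast
  qed
  moreover have "0 < c1 * c0 / (2 * C\<^sup>2 * K)" using c0 c1 C K by simp
  ultimately show "\<exists>c>0. \<forall>n. \<exists>y\<in>V. (\<exists>k\<le>r. (E ^^ k) y v) \<and> c * (\<mu> - \<delta>) ^ n \<le> saw_count V E y n"
    by blast
qed

lemma growth_lower_bound_if_near:
  assumes sg: "simple_graph V E" and lf: "locally_finite V E" and mu: "1 \<le> \<mu>"
    and up: "uniform_growth_bound V E \<mu>" and near: "near_growth_lower_bound V E \<mu> v r"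
  shows "growth_lower_bound V E \<mu> v"
proof -
  have "near_growth_lower_bound V E \<mu> v 0"
    using near by (induction r) (auto intro: near_growth_lower_bound_step[OF sg lf mu up])
  then show ?thesis
    unfolding near_growth_lower_bound_def growth_lower_bound_def by auto
qed

lemma growth_lower_bound_connected:
  assumes sg: "simple_graph V E" and lf: "locally_finite V E" and mu: "1 \<le> \<mu>"
    and up: "uniform_growth_bound V E \<mu>" and con: "graph_connected V E"
    and u: "u \<in> V" "growth_lower_bound V E \<mu> u" and v: "v \<in> V"
  shows "growth_lower_bound V E \<mu> v"
proof -
  obtain k where "(E ^^ k) u v"
    using con u v unfolding graph_connected_def rtranclp_power by blast
  then have "near_growth_lower_bound V E \<mu> v k"
    using u unfolding near_growth_lower_bound_def growth_lower_bound_def by blast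
  then show ?thesis by (rule growth_lower_bound_if_near[OF sg lf mu up])
qed

lemma quasi_transitive_saw_count_representatives:
  assumes sg: "simple_graph V E" and lf: "locally_finite V E"
    and qt: "coloured_quasi_transitive V E chi"
  obtains W where "finite W" "W \<subseteq> V" "\<And>v. v \<in> V \<Longrightarrow> \<exists>w\<in>W. \<forall>n. saw_count V E v n = saw_count V E w n"
proof -
  obtain W where W: "finite W" "W \<subseteq> V"
    and rep: "\<And>v. v \<in> V \<Longrightarrow> \<exists>\<alpha>. coloured_automorphism V E chi \<alpha> \<and> \<alpha> v \<in> W"
    using qt unfolding coloured_quasi_transitive_def by blast
  have "\<exists>w\<in>W. \<forall>n. saw_count V E v n = saw_count V E w n" if "v \<in> V" for v
    using rep[OF that] card_saws_automorphism[OF sg lf _ _ that]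
    unfolding coloured_automorphism_def by metis
  with W show thesis by (intro that) auto
qed

lemma quasi_transitive_saw_count_max:
  assumes sg: "simple_graph V E" and inf: "infinite V" and con: "graph_connected V E"
    and lf: "locally_finite V E" and qt: "coloured_quasi_transitive V E chi"
  obtains W and M :: "nat \<Rightarrow> real"
  where "finite W" "W \<subseteq> V" "\<And>v n. saw_count V E v n \<le> M n" "\<And>n. \<exists>w\<in>W. saw_count V E w n = M n"
    "\<And>n. 1 \<le> M n" "\<And>m n. M (m + n) \<le> M m * M n"
proof -
  obtain W where W: "finite W" "W \<subseteq> V"
    and rep: "\<And>v. v \<in> V \<Longrightarrow> \<exists>w\<in>W. \<forall>n. saw_count V E v n = saw_count V E w n"
    using quasi_transitive_saw_count_representatives[OF sg lf qt] by blast
  obtain v0 where "v0 \<in> V" using inf by (metis ex_in_conv finite.emptyI)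
  then have Wne: "W \<noteq> {}" using rep by blast
  define M where "M n = Max ((\<lambda>w. saw_count V E w n) ` W)" for n
  have attained: "\<exists>w\<in>W. saw_count V E w n = M n" for n
  proof -
    have "M n \<in> (\<lambda>w. saw_count V E w n) ` W" unfolding M_def using W(1) Wne by (intro Max_in) auto
    then show ?thesis by auto
  qed
  have le_M: "saw_count V E v n \<le> M n" for v n
  proof (cases "v \<in> V")
    case True
    then obtain w where "w \<in> W" "saw_count V E v n = saw_count V E w n" using rep by blast
    with W(1) show ?thesis unfolding M_def by (simp add: Max_ge)
  next
    case False
    obtain w where "w \<in> W" "saw_count V E w n = M n" using attained by blast
    then have "0 \<le> M n" by (metis of_nat_0_le_iff)
    with False show ?thesis by (simp add: saws_avoiding_empty)
  qed
  have M1: "1 \<le> M n" for n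
  proof -
    obtain w where w: "w \<in> W" "saw_count V E w n = M n" using attained by blast
    then have "saws_avoiding V E {} n w \<noteq> {}" using saws_avoiding_nonempty[OF sg lf inf con] W(2) by blast
    with finite_saws_avoiding[OF sg lf] have "1 \<le> card (saws_avoiding V E {} n w)"
      by (simp add: Suc_le_eq card_gt_0_iff)
    then have "1 \<le> saw_count V E w n" by simp
    with w(2) show ?thesis by simp
  qed
  have Msub: "M (m + n) \<le> M m * M n" for m n
  proof -
    obtain w where w: "w \<in> W" "saw_count V E w (m + n) = M (m + n)" using attained by blast
    have "saw_count V E w (m + n) \<le> saw_count V E w m * M n"
      by (rule saw_count_submult[OF sg lf le_M])
    also have "\<dots> \<le> M m * M n" using le_M M1[of n] by (intro mult_right_mono) auto
    finally show ?thesis using w by simp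
  qed
  show thesis by (rule that[OF W le_M attained M1 Msub])
qed

lemma quasi_transitive_growth_bounds:
  assumes sg: "simple_graph V E" and inf: "infinite V" and con: "graph_connected V E"
    and lf: "locally_finite V E" and qt: "coloured_quasi_transitive V E chi"
  obtains \<mu> where "1 \<le> \<mu>" "uniform_growth_bound V E \<mu>" "\<forall>v\<in>V. growth_lower_bound V E \<mu> v"
proof -
  obtain W and M :: "nat \<Rightarrow> real" where W: "finite W" "W \<subseteq> V"
    and le_M: "\<And>v n. saw_count V E v n \<le> M n" and attained: "\<And>n. \<exists>w\<in>W. saw_count V E w n = M n"
    and M1: "\<And>n. 1 \<le> M n" and Msub: "\<And>m n. M (m + n) \<le> M m * M n"
    using quasi_transitive_saw_count_max[OF sg inf con lf qt] by blast
  obtain \<mu> where mu: "1 \<le> \<mu>" "\<And>n. \<mu> ^ n \<le> M n"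
    and upper: "\<And>\<epsilon>. 0 < \<epsilon> \<Longrightarrow> \<exists>C. \<forall>n. M n \<le> C * (\<mu> + \<epsilon>) ^ n"
    using submultiplicative_growth_rate[OF M1 Msub] by blast
  have up: "uniform_growth_bound V E \<mu>"
    unfolding uniform_growth_bound_def
  proof (intro allI impI)
    fix \<epsilon> :: real assume "0 < \<epsilon>"
    then obtain C where "\<forall>n. M n \<le> C * (\<mu> + \<epsilon>) ^ n" using upper by blast
    then show "\<exists>C. \<forall>u\<in>V. \<forall>j. saw_count V E u j \<le> C * (\<mu> + \<epsilon>) ^ j"
      using le_M order_trans by blast
  qed
  have "growth_lower_bound V E \<mu> v" if v: "v \<in> V" for v
  proof -
    have "\<forall>w\<in>W. \<exists>k. (E ^^ k) w v"
      using con v W unfolding graph_connected_def by (auto simp: rtranclp_power)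
    then obtain dist where dist: "\<And>w. w \<in> W \<Longrightarrow> (E ^^ dist w) w v" by metis
    have dist_le: "dist w \<le> (\<Sum>w\<in>W. dist w)" if "w \<in> W" for w using W(1) that by (intro member_le_sum) auto
    have "near_growth_lower_bound V E \<mu> v (\<Sum>w\<in>W. dist w)"
      unfolding near_growth_lower_bound_def
    proof (intro allI impI exI[of _ 1] conjI)
      fix \<delta> :: real and n assume \<delta>: "0 < \<delta>" "\<delta> < \<mu>"
      obtain w where w: "w \<in> W" "saw_count V E w n = M n" using attained by blast
      have "1 * (\<mu> - \<delta>) ^ n \<le> M n" using \<delta> mu(2)[of n] power_mono[of "\<mu> - \<delta>" \<mu> n] by simp
      with w W dist dist_le
      show "\<exists>y\<in>V. (\<exists>k\<le>\<Sum>w\<in>W. dist w. (E ^^ k) y v) \<and> 1 * (\<mu> - \<delta>) ^ n \<le> saw_count V E y n"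
        by (intro bexI[of _ w]) auto
    qed simp
    then show ?thesis by (rule growth_lower_bound_if_near[OF sg lf mu(1) up])
  qed
  with mu(1) up show thesis by (intro that) auto
qed

section \<open>Paths through the gadget\<close>

definition paths_between :: "'c set \<Rightarrow> ('c \<Rightarrow> 'c \<Rightarrow> bool) \<Rightarrow> 'c \<Rightarrow> 'c \<Rightarrow> 'c list set" where
  "paths_between Vg Eg a b =
     {xs. xs \<noteq> [] \<and> hd xs = a \<and> last xs = b \<and> set xs \<subseteq> Vg \<and> distinct xs \<and> successively Eg xs}"

lemma gadget_paths_eq: "gadget_paths Vg Eg p = paths_between Vg Eg (p 0) (p 1)"
  unfolding gadget_paths_def paths_between_def successively_conv_nth by auto

lemma finite_paths_between: "finite Vg \<Longrightarrow> finite (paths_between Vg Eg a b)"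
  by (rule finite_subset[OF _ finite_subset_distinct]) (auto simp: paths_between_def)

lemma sum_paths_between_automorphism_le:
  fixes f :: "nat \<Rightarrow> real"
  assumes fin: "finite Vg" and nn: "\<And>k. 0 \<le> f k"
    and aut: "bij_betw \<sigma> Vg Vg" "\<forall>x\<in>Vg. \<forall>y\<in>Vg. Eg (\<sigma> x) (\<sigma> y) \<longleftrightarrow> Eg x y"
  shows "(\<Sum>xs\<in>paths_between Vg Eg a b. f (length xs)) \<le> (\<Sum>xs\<in>paths_between Vg Eg (\<sigma> a) (\<sigma> b). f (length xs))"
proof -
  have sub: "map \<sigma> ` paths_between Vg Eg a b \<subseteq> paths_between Vg Eg (\<sigma> a) (\<sigma> b)"
  proof (intro image_subsetI)
    fix xs assume "xs \<in> paths_between Vg Eg a b"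
    with automorphism_preserves_path[OF aut, of xs] show "map \<sigma> xs \<in> paths_between Vg Eg (\<sigma> a) (\<sigma> b)"
      unfolding paths_between_def by (auto simp: hd_map last_map)
  qed
  have "inj_on (map \<sigma>) (paths_between Vg Eg a b)"
  proof (rule inj_onI)
    fix xs ys assume "xs \<in> paths_between Vg Eg a b" "ys \<in> paths_between Vg Eg a b"
      and eq: "map \<sigma> xs = map \<sigma> ys"
    then have "inj_on \<sigma> (set xs \<union> set ys)"
      using bij_betw_imp_inj_on[OF aut(1)] unfolding paths_between_def by (auto intro: inj_on_subset)
    with eq show "xs = ys" using inj_on_map_eq_map by blast
  qed
  then have "(\<Sum>xs\<in>paths_between Vg Eg a b. f (length xs)) =
      (\<Sum>ys\<in>map \<sigma> ` paths_between Vg Eg a b. f (length ys))"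
    by (subst sum.reindex) simp_all
  also have "\<dots> \<le> (\<Sum>xs\<in>paths_between Vg Eg (\<sigma> a) (\<sigma> b). f (length xs))"
    by (rule sum_mono2[OF finite_paths_between[OF fin] sub nn])
  finally show ?thesis .
qed

lemma sum_paths_between_rev_le:
  fixes f :: "nat \<Rightarrow> real"
  assumes fin: "finite Vg" and nn: "\<And>k. 0 \<le> f k" and sym: "\<And>x y. Eg x y \<Longrightarrow> Eg y x"
  shows "(\<Sum>xs\<in>paths_between Vg Eg a b. f (length xs)) \<le> (\<Sum>xs\<in>paths_between Vg Eg b a. f (length xs))"
proof -
  have sub: "rev ` paths_between Vg Eg a b \<subseteq> paths_between Vg Eg b a"
  proof (intro image_subsetI)
    fix xs assume xs: "xs \<in> paths_between Vg Eg a b"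
    then have "successively Eg xs" unfolding paths_between_def by simp
    then have "successively (\<lambda>x y. Eg y x) xs" by (rule successively_mono) (rule sym)
    with xs show "rev xs \<in> paths_between Vg Eg b a"
      unfolding paths_between_def by (auto simp: hd_rev last_rev)
  qed
  have "(\<Sum>xs\<in>paths_between Vg Eg a b. f (length xs)) = (\<Sum>ys\<in>rev ` paths_between Vg Eg a b. f (length ys))"
    by (subst sum.reindex) (simp_all add: inj_on_def)
  also have "\<dots> \<le> (\<Sum>xs\<in>paths_between Vg Eg b a. f (length xs))"
    by (rule sum_mono2[OF finite_paths_between[OF fin] sub nn])
  finally show ?thesis .
qed

lemma transitive_on_three_points_rotation:
  assumes distinct: "x0 \<noteq> x1" "x0 \<noteq> x2" "x1 \<noteq> x2"
    and perm: "\<And>\<sigma>. \<sigma> \<in> H \<Longrightarrow> inj_on \<sigma> {x0, x1, x2} \<and> \<sigma> ` {x0, x1, x2} \<subseteq> {x0, x1, x2}"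
    and comp: "\<And>\<sigma> \<tau>. \<sigma> \<in> H \<Longrightarrow> \<tau> \<in> H \<Longrightarrow> \<sigma> \<circ> \<tau> \<in> H"
    and trans: "\<exists>\<sigma>\<in>H. \<sigma> x0 = x1" "\<exists>\<sigma>\<in>H. \<sigma> x0 = x2"
  shows "\<exists>\<sigma>\<in>H. (\<sigma> x0 = x1 \<and> \<sigma> x1 = x2 \<and> \<sigma> x2 = x0) \<or> (\<sigma> x0 = x2 \<and> \<sigma> x2 = x1 \<and> \<sigma> x1 = x0)"
proof -
  have images: "\<sigma> x1 \<in> {x0, x1, x2} - {\<sigma> x0}" "\<sigma> x2 \<in> {x0, x1, x2} - {\<sigma> x0, \<sigma> x1}" if "\<sigma> \<in> H" for \<sigma>
    using perm[OF that] distinct by (auto simp: inj_on_def)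
  obtain s1 where s1: "s1 \<in> H" "s1 x0 = x1" using trans(1) by blast
  obtain s2 where s2: "s2 \<in> H" "s2 x0 = x2" using trans(2) by blast
  consider "s1 x1 = x2" | "s2 x2 = x1" | "s1 x1 = x0" "s2 x2 = x0"
    using images[OF s1(1)] images[OF s2(1)] s1(2) s2(2) by auto
  then show ?thesis
  proof cases
    case 1
    then show ?thesis using s1 images[OF s1(1)] by auto
  next
    case 2
    then show ?thesis using s2 images[OF s2(1)] by auto
  next
    case 3
    then have "s1 x2 = x2" "s2 x1 = x1" using s1 s2 images[OF s1(1)] images[OF s2(1)] by auto
    then show ?thesis using 3 s1 s2 comp[OF s1(1) s2(1)] by (intro bexI[of _ "s1 \<circ> s2"]) auto
  qed
qed

lemma local_transformation_port_rotation:
  assumes lt: "local_transformation Vg Eg p"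
  obtains \<sigma> where "gadget_automorphism Vg Eg \<sigma>"
    "(\<sigma> (p 0) = p 1 \<and> \<sigma> (p 1) = p 2 \<and> \<sigma> (p 2) = p 0) \<or> (\<sigma> (p 0) = p 2 \<and> \<sigma> (p 2) = p 1 \<and> \<sigma> (p 1) = p 0)"
proof -
  obtain H where H: "\<forall>\<sigma>\<in>H. gadget_automorphism Vg Eg \<sigma> \<and> \<sigma> ` (p ` {0,1,2}) = p ` {0,1,2}"
    "\<forall>\<sigma>\<in>H. \<forall>\<tau>\<in>H. \<sigma> \<circ> \<tau> \<in> H" "\<forall>i\<in>{0,1,2}. \<forall>j\<in>{0,1,2}. \<exists>\<sigma>\<in>H. \<sigma> (p i) = p j"
    using lt unfolding local_transformation_def by blast
  have inj: "inj_on p {0,1,2}" and pV: "p ` {0,1,2} \<subseteq> Vg"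
    using lt unfolding local_transformation_def by auto
  have ports: "p ` {0,1,2} = {p 0, p 1, p 2}" by auto
  have "\<exists>\<sigma>\<in>H. (\<sigma> (p 0) = p 1 \<and> \<sigma> (p 1) = p 2 \<and> \<sigma> (p 2) = p 0) \<or>
      (\<sigma> (p 0) = p 2 \<and> \<sigma> (p 2) = p 1 \<and> \<sigma> (p 1) = p 0)"
  proof (rule transitive_on_three_points_rotation)
    have "p i \<noteq> p j" if "i \<in> {0,1,2}" "j \<in> {0,1,2}" "i \<noteq> j" for i j
      using inj_onD[OF inj _ that(1,2)] that(3) by blast
    then show "p 0 \<noteq> p 1" "p 0 \<noteq> p 2" "p 1 \<noteq> p 2" by auto
    show "inj_on \<sigma> {p 0, p 1, p 2} \<and> \<sigma> ` {p 0, p 1, p 2} \<subseteq> {p 0, p 1, p 2}" if "\<sigma> \<in> H" for \<sigma>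
    proof
      have "inj_on \<sigma> Vg" using H(1) that unfolding gadget_automorphism_def by (auto dest: bij_betw_imp_inj_on)
      then show "inj_on \<sigma> {p 0, p 1, p 2}" by (rule inj_on_subset) (use pV in auto)
      show "\<sigma> ` {p 0, p 1, p 2} \<subseteq> {p 0, p 1, p 2}" using H(1) that unfolding ports by blast
    qed
    show "\<sigma> \<circ> \<tau> \<in> H" if "\<sigma> \<in> H" "\<tau> \<in> H" for \<sigma> \<tau> using H(2) that by blast
    show "\<exists>\<sigma>\<in>H. \<sigma> (p 0) = p 1" using H(3)[rule_format, of 0 1] by simp
    show "\<exists>\<sigma>\<in>H. \<sigma> (p 0) = p 2" using H(3)[rule_format, of 0 2] by simp
  qed
  then obtain \<sigma> where \<sigma>: "\<sigma> \<in> H" "(\<sigma> (p 0) = p 1 \<and> \<sigma> (p 1) = p 2 \<and> \<sigma> (p 2) = p 0) \<or>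
      (\<sigma> (p 0) = p 2 \<and> \<sigma> (p 2) = p 1 \<and> \<sigma> (p 1) = p 0)" by blast
  show thesis by (rule that[OF _ \<sigma>(2)]) (use H(1) \<sigma>(1) in blast)
qed

lemma sum_gadget_paths_between_ports:
  fixes f :: "nat \<Rightarrow> real"
  assumes lt: "local_transformation Vg Eg p" and nn: "\<And>k. 0 \<le> f k"
    and ij: "i \<in> {0,1,2}" "j \<in> {0,1,2}" "i \<noteq> j"
  shows "(\<Sum>xs\<in>paths_between Vg Eg (p i) (p j). f (length xs)) = (\<Sum>xs\<in>gadget_paths Vg Eg p. f (length xs))"
proof -
  have fin: "finite Vg" and sg: "simple_graph Vg Eg" using lt unfolding local_transformation_def by auto
  define S where "S a b = (\<Sum>xs\<in>paths_between Vg Eg (p a) (p b). f (length xs))" for a b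
  have rev_le: "S a b \<le> S b a" for a b
    unfolding S_def by (rule sum_paths_between_rev_le[OF fin nn simple_graph_sym[OF sg]])
  have rev: "S a b = S b a" for a b using rev_le[of a b] rev_le[of b a] by linarith
  obtain \<sigma> where \<sigma>: "gadget_automorphism Vg Eg \<sigma>"
    "(\<sigma> (p 0) = p 1 \<and> \<sigma> (p 1) = p 2 \<and> \<sigma> (p 2) = p 0) \<or> (\<sigma> (p 0) = p 2 \<and> \<sigma> (p 2) = p 1 \<and> \<sigma> (p 1) = p 0)"
    using local_transformation_port_rotation[OF lt] by blast
  have aut: "S a b \<le> S a' b'" if "\<sigma> (p a) = p a'" "\<sigma> (p b) = p b'" for a b a' b'
    using sum_paths_between_automorphism_le[OF fin nn, where \<sigma>=\<sigma> and Eg=Eg and a="p a" and b="p b"] \<sigma>(1) that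
    unfolding S_def gadget_automorphism_def by simp
  have "S 0 1 = S 1 2 \<and> S 1 2 = S 2 0"
    using \<sigma>(2)
  proof
    assume "\<sigma> (p 0) = p 1 \<and> \<sigma> (p 1) = p 2 \<and> \<sigma> (p 2) = p 0"
    then have "S 0 1 \<le> S 1 2" "S 1 2 \<le> S 2 0" "S 2 0 \<le> S 0 1" by (auto intro: aut)
    then show ?thesis by linarith
  next
    assume "\<sigma> (p 0) = p 2 \<and> \<sigma> (p 2) = p 1 \<and> \<sigma> (p 1) = p 0"
    then have "S 0 1 \<le> S 2 0" "S 2 0 \<le> S 1 2" "S 1 2 \<le> S 0 1" by (auto intro: aut)
    then show ?thesis by linarith
  qed
  then have "S i j = S 0 1" using ij rev[of 1 0] rev[of 2 1] rev[of 0 2] by fastforce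
  then show ?thesis unfolding S_def gadget_paths_eq .
qed

lemma gadget_paths_nonempty:
  assumes lt: "local_transformation Vg Eg p"
  shows "gadget_paths Vg Eg p \<noteq> {}"
proof -
  have sg: "simple_graph Vg Eg" and con: "graph_connected Vg Eg" and pV: "p ` {0,1,2} \<subseteq> Vg"
    using lt unfolding local_transformation_def by auto
  have "Eg\<^sup>*\<^sup>* (p 0) (p 1)" using con pV unfolding graph_connected_def by auto
  then obtain xs where xs: "xs \<noteq> []" "hd xs = p 0" "last xs = p 1" "distinct xs" "successively Eg xs"
    using path_of_rtranclp by metis
  then have "set xs \<subseteq> Vg" using successively_set_subset[OF sg xs(5,1)] pV by auto
  with xs show ?thesis unfolding gadget_paths_eq paths_between_def by blast
qed

definition h_series :: "'c list set \<Rightarrow> real \<Rightarrow> real" where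
  "h_series P x = (\<Sum>xs\<in>P. x ^ (length xs + 1))"

text \<open>The coefficient of x^n in (h_series P x)^m.\<close>
primrec h_power_coeff :: "'c list set \<Rightarrow> nat \<Rightarrow> nat \<Rightarrow> real" where
  "h_power_coeff P 0 n = (if n = 0 then 1 else 0)"
| "h_power_coeff P (Suc m) n =
     (\<Sum>xs\<in>P. if length xs + 1 \<le> n then h_power_coeff P m (n - (length xs + 1)) else 0)"

lemma h_power_coeff_nonneg: "0 \<le> h_power_coeff P m n"
  by (induction m arbitrary: n) (auto intro!: sum_nonneg)

lemma sum_atMost_shift:
  fixes g :: "nat \<Rightarrow> real"
  assumes "l \<le> N"
  shows "(\<Sum>n\<le>N. if l \<le> n then g (n - l) * x ^ n else 0) = x ^ l * (\<Sum>n\<le>N - l. g n * x ^ n)"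
proof -
  have "(\<Sum>n\<le>N. if l \<le> n then g (n - l) * x ^ n else 0) = (\<Sum>n\<in>{l..N}. g (n - l) * x ^ n)"
    by (simp add: sum.If_cases Int_def atLeastAtMost_def atLeast_def conj_commute)
  also have "\<dots> = (\<Sum>n\<in>{0..N - l}. g n * x ^ (n + l))"
    using sum.shift_bounds_cl_nat_ivl[of "\<lambda>n. g (n - l) * x ^ n" 0 l "N - l"] assms by simp
  also have "\<dots> = x ^ l * (\<Sum>n\<le>N - l. g n * x ^ n)"
    by (simp add: sum_distrib_left power_add atLeast0AtMost algebra_simps)
  finally show ?thesis .
qed

lemma h_power_coeff_generating:
  assumes fin: "finite P" and L: "\<forall>xs\<in>P. length xs + 1 \<le> L" and N: "m * L \<le> N"
  shows "(\<Sum>n\<le>N. h_power_coeff P m n * x ^ n) = h_series P x ^ m"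
  using N
proof (induction m arbitrary: N)
  case 0
  have "(\<Sum>n\<le>N. h_power_coeff P 0 n * x ^ n) = (\<Sum>n\<le>N. if n = 0 then 1 else 0)"
    by (intro sum.cong) auto
  then show ?case by simp
next
  case (Suc m)
  have "(\<Sum>n\<le>N. h_power_coeff P (Suc m) n * x ^ n) = (\<Sum>xs\<in>P. \<Sum>n\<le>N.
      if length xs + 1 \<le> n then h_power_coeff P m (n - (length xs + 1)) * x ^ n else 0)"
    unfolding h_power_coeff.simps sum_distrib_right by (subst sum.swap) (auto intro!: sum.cong)
  also have "\<dots> = (\<Sum>xs\<in>P. x ^ (length xs + 1) * h_series P x ^ m)"
  proof (rule sum.cong[OF refl])
    fix xs assume "xs \<in> P"
    with L Suc.prems have "length xs + 1 \<le> N" "m * L \<le> N - (length xs + 1)" by auto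
    then show "(\<Sum>n\<le>N. if length xs + 1 \<le> n then h_power_coeff P m (n - (length xs + 1)) * x ^ n else 0) =
        x ^ (length xs + 1) * h_series P x ^ m"
      using sum_atMost_shift[of "length xs + 1" N "h_power_coeff P m" x] Suc.IH by simp
  qed
  also have "\<dots> = h_series P x ^ Suc m" by (simp add: h_series_def sum_distrib_right)
  finally show ?case .
qed

lemma h_power_coeff_supermult:
  "h_power_coeff P m1 n1 * h_power_coeff P m2 n2 \<le> h_power_coeff P (m1 + m2) (n1 + n2)"
proof (induction m1 arbitrary: n1)
  case 0
  then show ?case by (simp add: h_power_coeff_nonneg)
next
  case (Suc m1)
  have "h_power_coeff P (Suc m1) n1 * h_power_coeff P m2 n2 = (\<Sum>xs\<in>P.
      (if length xs + 1 \<le> n1 then h_power_coeff P m1 (n1 - (length xs + 1)) else 0) * h_power_coeff P m2 n2)"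
    by (simp add: sum_distrib_right)
  also have "\<dots> \<le> (\<Sum>xs\<in>P. if length xs + 1 \<le> n1 + n2
      then h_power_coeff P (m1 + m2) (n1 + n2 - (length xs + 1)) else 0)"
  proof (rule sum_mono)
    fix xs :: "'a list"
    show "(if length xs + 1 \<le> n1 then h_power_coeff P m1 (n1 - (length xs + 1)) else 0) * h_power_coeff P m2 n2
        \<le> (if length xs + 1 \<le> n1 + n2 then h_power_coeff P (m1 + m2) (n1 + n2 - (length xs + 1)) else 0)"
    proof (cases "length xs + 1 \<le> n1")
      case True
      then have "n1 + n2 - (length xs + 1) = n1 - (length xs + 1) + n2" by simp
      with True Suc.IH[of "n1 - (length xs + 1)"] show ?thesis by simp
    qed (simp add: h_power_coeff_nonneg)
  qed
  also have "\<dots> = h_power_coeff P (Suc m1 + m2) (n1 + n2)" by simp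
  finally show ?case .
qed

lemma h_power_coeff_power: "h_power_coeff P m n ^ k \<le> h_power_coeff P (k * m) (k * n)"
proof (induction k)
  case (Suc k)
  have "h_power_coeff P m n ^ Suc k \<le> h_power_coeff P m n * h_power_coeff P (k * m) (k * n)"
    using Suc.IH by (simp add: mult_left_mono h_power_coeff_nonneg)
  also have "\<dots> \<le> h_power_coeff P (m + k * m) (n + k * n)" by (rule h_power_coeff_supermult)
  finally show ?case by simp
qed simp

lemma h_power_coeff_eq_0:
  assumes "\<forall>xs\<in>P. 2 \<le> length xs" "n < 3 * m"
  shows "h_power_coeff P m n = 0"
  using assms(2)
proof (induction m arbitrary: n)
  case (Suc m)
  have "(if length xs + 1 \<le> n then h_power_coeff P m (n - (length xs + 1)) else 0) = 0" if "xs \<in> P" for xs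
    using assms(1) that Suc by auto
  then show ?case by simp
qed simp

lemma h_series_root:
  assumes fin: "finite P" and ne: "P \<noteq> {}" and y: "0 < y" "y \<le> real (card P)"
  obtains x where "0 < x" "x \<le> 1" "h_series P x = y" "\<And>x'. 0 \<le> x' \<Longrightarrow> x' < x \<Longrightarrow> h_series P x' < y"
proof -
  have "continuous_on {0..1} (h_series P)" unfolding h_series_def by (intro continuous_intros)
  moreover have "h_series P 0 = 0" "h_series P 1 = real (card P)" unfolding h_series_def by simp_all
  ultimately obtain x where x: "0 \<le> x" "x \<le> 1" "h_series P x = y"
    using IVT'[of "h_series P" 0 y 1] y by auto
  then have "0 < x" using y \<open>h_series P 0 = 0\<close> by (cases "x = 0") auto
  moreover have "h_series P x' < y" if "0 \<le> x'" "x' < x" for x'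
  proof -
    have "h_series P x' < h_series P x" unfolding h_series_def
      by (rule sum_strict_mono[OF fin ne], rule power_strict_mono) (use that in auto)
    with x show ?thesis by simp
  qed
  ultimately show thesis using x that by blast
qed

section \<open>The replaced graph\<close>

lemma card_saws_avoiding_Suc_diff:
  assumes sg: "simple_graph V E" and lf: "locally_finite V E" and v: "v \<in> V" "v \<notin> B"
  shows "card (saws_avoiding V E B (Suc n) v) = (\<Sum>u\<in>nbrs E v - B. card (saws_avoiding V E (insert v B) n u))"
proof -
  have "(\<Sum>u\<in>nbrs E v - B. card (saws_avoiding V E (insert v B) n u)) =
      (\<Sum>u\<in>nbrs E v. card (saws_avoiding V E (insert v B) n u))"
    using locally_finite_nbrs[OF lf v(1)] by (intro sum.mono_neutral_left) (auto simp: saws_avoiding_empty)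
  then show ?thesis using card_saws_avoiding_Suc[OF sg lf v] by simp
qed

lemma card_saws_avoiding_two_steps:
  assumes sg: "simple_graph V E" and lf: "locally_finite V E" and w: "w \<in> V" "w \<notin> B"
  shows "real (card (saws_avoiding V E B (Suc (Suc k)) w)) = (\<Sum>b\<in>nbrs E w - B. \<Sum>w'\<in>nbrs E b - insert w B.
      real (card (saws_avoiding V E (insert b (insert w B)) k w')))"
proof -
  have "card (saws_avoiding V E (insert w B) (Suc k) b) =
      (\<Sum>w'\<in>nbrs E b - insert w B. card (saws_avoiding V E (insert b (insert w B)) k w'))"
    if "b \<in> nbrs E w - B" for b
  proof -
    have "b \<in> V" "b \<noteq> w" "b \<notin> nbrs E b"
      using that simple_graph_in_verts[OF sg] simple_graph_irrefl[OF sg] unfolding nbrs_def by auto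
    then show ?thesis
      using card_saws_avoiding_Suc_diff[OF sg lf, of b "insert w B" k] that
      by (simp add: Diff_insert2[symmetric] insert_Diff_if)
  qed
  then show ?thesis using card_saws_avoiding_Suc_diff[OF sg lf w] by simp
qed

lemma sum_Sigma_Sigma:
  assumes "finite A" "\<And>a. a \<in> A \<Longrightarrow> finite (B a)" "\<And>a b. a \<in> A \<Longrightarrow> b \<in> B a \<Longrightarrow> finite (C a b)"
  shows "(\<Sum>(a, b, c)\<in>Sigma A (\<lambda>a. Sigma (B a) (C a)). f a b c) = (\<Sum>a\<in>A. \<Sum>b\<in>B a. \<Sum>c\<in>C a b. f a b c)"
proof -
  have "(\<Sum>a\<in>A. \<Sum>b\<in>B a. \<Sum>c\<in>C a b. f a b c) = (\<Sum>a\<in>A. \<Sum>(b, c)\<in>Sigma (B a) (C a). f a b c)"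
    using assms by (intro sum.cong refl sum.Sigma) auto
  also have "\<dots> = (\<Sum>(a, b, c)\<in>Sigma A (\<lambda>a. Sigma (B a) (C a)). f a b c)"
    using assms by (subst sum.Sigma) (auto intro!: finite_SigmaI)
  finally show ?thesis by simp
qed

locale gadget_replacement =
  fixes V :: "'a set" and E :: "'a \<Rightarrow> 'a \<Rightarrow> bool" and chi :: "'a \<Rightarrow> bool"
    and Vg :: "'c set" and Eg :: "'c \<Rightarrow> 'c \<Rightarrow> bool" and p :: "nat \<Rightarrow> 'c"
    and att :: "'a \<Rightarrow> 'a \<Rightarrow> nat"
  assumes sg: "simple_graph V E" and lf: "locally_finite V E"
    and bip: "bipartite_colouring V E chi"
    and deg3: "\<forall>v\<in>V. chi v \<longrightarrow> card (nbrs E v) = 3"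
    and lt: "local_transformation Vg Eg p"
    and att: "\<forall>b\<in>V. chi b \<longrightarrow> bij_betw (att b) (nbrs E b) {0,1,2}"
begin

abbreviation "tV \<equiv> tilde_V V chi Vg"
abbreviation "tE \<equiv> tilde_E V E chi Eg p att"
abbreviation in_gadget :: "'a \<Rightarrow> 'c \<Rightarrow> 'a + 'a \<times> 'c" where
  "in_gadget b z \<equiv> Inr (b, z)"

lemma finite_Vg: "finite Vg" and simple_graph_gadget: "simple_graph Vg Eg"
  using lt unfolding local_transformation_def by auto

lemma port_in_Vg: "i \<in> {0,1,2} \<Longrightarrow> p i \<in> Vg"
  using lt unfolding local_transformation_def by auto

lemma port_inj: "i \<in> {0,1,2} \<Longrightarrow> j \<in> {0,1,2} \<Longrightarrow> p i = p j \<Longrightarrow> i = j"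
  using lt unfolding local_transformation_def by (auto dest: inj_onD)

lemma att_in_ports: "b \<in> V \<Longrightarrow> chi b \<Longrightarrow> E b w \<Longrightarrow> att b w \<in> {0,1,2}"
  using att unfolding bij_betw_def nbrs_def by blast

lemma att_inj: "b \<in> V \<Longrightarrow> chi b \<Longrightarrow> E b w \<Longrightarrow> E b w' \<Longrightarrow> w \<noteq> w' \<Longrightarrow> att b w \<noteq> att b w'"
  using att unfolding bij_betw_def inj_on_def nbrs_def by auto

lemma edge_colours: "E x y \<Longrightarrow> chi x \<noteq> chi y"
  using bip unfolding bipartite_colouring_def by blast

lemma black_white_edge:
  assumes "E x y" "\<not> chi y"
  shows "x \<in> V" "chi x" "y \<in> V" "E y x"
  using assms edge_colours simple_graph_in_verts[OF sg] simple_graph_sym[OF sg] by auto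

lemmas finite_nbrs = locally_finite_nbrs[OF lf]

lemma nbrs_in_V: "u \<in> nbrs E v \<Longrightarrow> u \<in> V"
  using simple_graph_in_verts[OF sg] unfolding nbrs_def by blast

lemma two_step_nbrs:
  assumes "\<not> chi w" "b \<in> nbrs E w - B" "w' \<in> nbrs E b - insert w B"
  shows "b \<in> V" "chi b" "E b w" "E b w'" "w \<noteq> w'" "w' \<in> V" "\<not> chi w'"
  using assms black_white_edge[of _ w] edge_colours simple_graph_in_verts[OF sg]
  unfolding nbrs_def by (auto dest: simple_graph_sym[OF sg])

lemma sum_two_step_Sigma:
  assumes "w \<in> V" "\<And>b w'. finite (S b w')"
  shows "finite (Sigma (nbrs E w - B) (\<lambda>b. Sigma (nbrs E b - insert w B) (S b)))"
    and "(\<Sum>(b, w', s)\<in>Sigma (nbrs E w - B) (\<lambda>b. Sigma (nbrs E b - insert w B) (S b)). f b w' s) =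
      (\<Sum>b\<in>nbrs E w - B. \<Sum>w'\<in>nbrs E b - insert w B. \<Sum>s\<in>S b w'. f b w' s)"
  using assms finite_nbrs nbrs_in_V by (auto intro!: finite_SigmaI sum_Sigma_Sigma)

lemma tilde_V_Inl [simp]: "Inl w \<in> tV \<longleftrightarrow> w \<in> V \<and> \<not> chi w"
  and tilde_V_Inr [simp]: "Inr (b, x) \<in> tV \<longleftrightarrow> b \<in> V \<and> chi b \<and> x \<in> Vg"
  unfolding tilde_V_def by auto

lemma simple_graph_tilde: "simple_graph tV tE"
proof -
  have "x \<in> tV \<and> y \<in> tV" if "tE x y" for x y
    using that att_in_ports port_in_Vg simple_graph_in_verts[OF simple_graph_gadget]
    by (cases x; cases y) auto
  moreover have "tE y x" if "tE x y" for x y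
    using that simple_graph_sym[OF simple_graph_gadget] by (cases x; cases y) auto
  moreover have "\<not> tE x x" for x using simple_graph_irrefl[OF simple_graph_gadget] by (cases x) auto
  ultimately show ?thesis unfolding simple_graph_def by blast
qed

lemma nbrs_tilde_Inl: "nbrs tE (Inl w) \<subseteq> (\<lambda>b. in_gadget b (p (att b w))) ` nbrs E w"
proof
  fix u assume "u \<in> nbrs tE (Inl w)"
  then show "u \<in> (\<lambda>b. in_gadget b (p (att b w))) ` nbrs E w"
    using simple_graph_sym[OF sg] unfolding nbrs_def by (cases u) auto
qed

lemma locally_finite_tilde: "locally_finite tV tE"
  unfolding locally_finite_def
proof
  fix v assume v: "v \<in> tV"
  show "finite (nbrs tE v)"
  proof (cases v)
    case (Inl w)
    then have "finite (nbrs E w)" using finite_nbrs v by auto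
    then show ?thesis using Inl nbrs_tilde_Inl finite_subset by blast
  next
    case (Inr bx)
    then obtain b x where bx: "v = Inr (b, x)" by (cases bx) auto
    have "nbrs tE v \<subseteq> in_gadget b ` Vg \<union> Inl ` nbrs E b"
      using simple_graph_in_verts[OF simple_graph_gadget] unfolding bx nbrs_def
      by (auto elim!: tilde_E.elims)
    moreover have "finite (nbrs E b)" using finite_nbrs v bx by auto
    ultimately show ?thesis using finite_Vg finite_subset by blast
  qed
qed

end

context gadget_replacement
begin

lemma tilde_saw_first_step:
  assumes "\<pi> \<in> saws_avoiding tV tE A (Suc n) (Inl w)"
  obtains b \<pi>' where "E b w" "\<pi> = Inl w # \<pi>'"
    "\<pi>' \<in> saws_avoiding tV tE (insert (Inl w) A) n (in_gadget b (p (att b w)))"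
proof -
  have w: "Inl w \<in> tV" "Inl w \<notin> A"
    using assms saws_avoiding_empty[of "Inl w" tV A] by blast+
  from assms obtain u where u: "u \<in> nbrs tE (Inl w)"
    and \<pi>: "\<pi> \<in> (#) (Inl w) ` saws_avoiding tV tE (insert (Inl w) A) n u"
    using saws_avoiding_Suc[OF simple_graph_tilde w] by blast
  obtain b where "E w b" "u = in_gadget b (p (att b w))" using nbrs_tilde_Inl u unfolding nbrs_def by blast
  with \<pi> simple_graph_sym[OF sg] that show thesis by blast
qed

lemma tilde_saw_split_gadget:
  assumes "\<pi> \<in> saws_avoiding tV tE A n (in_gadget b y)"
  shows "\<exists>seg rest. \<pi> = map (in_gadget b) seg @ rest \<and> seg \<noteq> [] \<and> hd seg = y \<and> distinct seg \<and>
     set seg \<subseteq> Vg \<and> successively Eg seg \<and> length seg \<le> Suc n \<and>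
     (rest = [] \<longrightarrow> length seg = Suc n) \<and>
     (rest \<noteq> [] \<longrightarrow> (\<exists>w'. E b w' \<and> w' \<in> V \<and> \<not> chi w' \<and> last seg = p (att b w') \<and> length seg \<le> n \<and>
        rest \<in> saws_avoiding tV tE (A \<union> in_gadget b ` set seg) (n - length seg) (Inl w')))"
  using assms
proof (induction n arbitrary: \<pi> y A)
  case 0
  then have "\<pi> = [in_gadget b y]" "y \<in> Vg" by (auto simp: saws_avoiding_0 split: if_splits)
  then show ?case by (intro exI[of _ "[y]"] exI[of _ "[]"]) auto
next
  case (Suc n)
  have v: "in_gadget b y \<in> tV" "in_gadget b y \<notin> A"
    using Suc.prems saws_avoiding_empty[of "in_gadget b y" tV A tE "Suc n"] by blast+
  then have bV: "b \<in> V" "chi b" "y \<in> Vg" by auto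
  from Suc.prems obtain u \<pi>' where u: "tE (in_gadget b y) u" and \<pi>: "\<pi> = in_gadget b y # \<pi>'"
    and \<pi>': "\<pi>' \<in> saws_avoiding tV tE (insert (in_gadget b y) A) n u"
    using saws_avoiding_Suc[OF simple_graph_tilde v] unfolding nbrs_def by blast
  show ?case
  proof (cases u)
    case (Inl w')
    have w': "E b w'" "w' \<in> V" "\<not> chi w'" "y = p (att b w')" using u Inl by auto
    have "\<pi>' \<in> saws_avoiding tV tE (A \<union> in_gadget b ` set [y]) (Suc n - length [y]) (Inl w')"
      using \<pi>' Inl by (simp add: insert_commute)
    moreover have "\<pi>' \<noteq> []" using \<pi>' unfolding saws_avoiding_def by auto
    ultimately show ?thesis using \<pi> w' bV by (intro exI[of _ "[y]"] exI[of _ \<pi>']) auto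
  next
    case (Inr cy)
    then obtain y' where u': "u = in_gadget b y'" "Eg y y'" using u by (cases cy) auto
    from Suc.IH[OF \<pi>'[unfolded u'(1)]] obtain seg rest where
      IH: "\<pi>' = map (in_gadget b) seg @ rest" "seg \<noteq> []" "hd seg = y'" "distinct seg"
      "set seg \<subseteq> Vg" "successively Eg seg" "length seg \<le> Suc n" "rest = [] \<longrightarrow> length seg = Suc n"
      "rest \<noteq> [] \<longrightarrow> (\<exists>w'. E b w' \<and> w' \<in> V \<and> \<not> chi w' \<and> last seg = p (att b w') \<and> length seg \<le> n \<and>
        rest \<in> saws_avoiding tV tE (insert (in_gadget b y) A \<union> in_gadget b ` set seg) (n - length seg) (Inl w'))"
      by blast
    have "y \<notin> set seg" using \<pi>' IH(1) unfolding saws_avoiding_def by auto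
    moreover have "insert (in_gadget b y) A \<union> in_gadget b ` set seg = A \<union> in_gadget b ` set (y # seg)"
      by auto
    ultimately show ?thesis
      using \<pi> IH bV u'(2) by (intro exI[of _ "y # seg"] exI[of _ rest]) (auto simp: successively_Cons)
  qed
qed

lemma tilde_saw_join:
  assumes b: "b \<in> V" "chi b" and w: "E b w" "\<not> chi w" and w': "E b w'"
    and seg: "seg \<in> paths_between Vg Eg (p (att b w)) (p (att b w'))"
    and rest: "rest \<in> saws_avoiding tV tE A' k (Inl w')"
    and A: "Inl w \<notin> A" "in_gadget b ` set seg \<inter> A = {}"
    and A': "A \<union> {Inl w} \<union> in_gadget b ` set seg \<subseteq> A'"
  shows "Inl w # map (in_gadget b) seg @ rest \<in> saws_avoiding tV tE A (k + length seg + 1) (Inl w)"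
proof -
  have s: "seg \<noteq> []" "hd seg = p (att b w)" "last seg = p (att b w')" "set seg \<subseteq> Vg"
    "distinct seg" "successively Eg seg" using seg unfolding paths_between_def by auto
  have r: "length rest = Suc k" "hd rest = Inl w'" "set rest \<subseteq> tV" "distinct rest"
    "successively tE rest" "set rest \<inter> A' = {}" using rest unfolding saws_avoiding_def by auto
  then have "rest \<noteq> []" by auto
  have "w \<in> V" "w' \<in> V" "\<not> chi w'"
    using r(2,3) \<open>rest \<noteq> []\<close> hd_in_set[OF \<open>rest \<noteq> []\<close>] simple_graph_in_verts[OF sg w(1)] by auto
  moreover have "successively tE (map (in_gadget b) seg)"
    unfolding successively_map using s(6) b by (auto elim: successively_mono)
  moreover have "distinct (map (in_gadget b) seg)" using s(5) by (simp add: distinct_map inj_on_def)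
  ultimately show ?thesis
    using s r \<open>rest \<noteq> []\<close> b w w' A A' unfolding saws_avoiding_def
    by (auto simp: successively_append_iff successively_Cons hd_map last_map)
qed

lemma tilde_saw_join_inj:
  assumes "map (in_gadget b1) s1 @ r1 = map (in_gadget b2) s2 @ r2"
    and "s1 \<noteq> []" "r1 \<noteq> []" "r2 \<noteq> []" "isl (hd r1)" "isl (hd r2)"
  shows "b1 = b2 \<and> s1 = s2 \<and> r1 = r2"
proof -
  have split: "takeWhile (\<lambda>x. \<not> isl x) (map (in_gadget b) s @ r) = map (in_gadget b) s"
      "dropWhile (\<lambda>x. \<not> isl x) (map (in_gadget b) s @ r) = r"
    if "r \<noteq> []" "isl (hd r)" for b s and r :: "('a + 'a \<times> 'c) list"
    using that by (induction s) (auto simp: neq_Nil_conv)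
  have m: "map (in_gadget b1) s1 = map (in_gadget b2) s2" and "r1 = r2"
    using split[OF assms(3,5), of b1 s1] split[OF assms(4,6), of b2 s2] assms(1) by metis+
  moreover have "b1 = b2" using m assms(2) by (cases s1; cases s2) auto
  moreover then have "s1 = s2" using m by (simp add: inj_def inj_map_eq_map)
  ultimately show ?thesis by simp
qed

end

section \<open>Lower bound on the walks of the replaced graph\<close>

context gadget_replacement
begin

definition tilde_over :: "'a set \<Rightarrow> ('a + 'a \<times> 'c) set" where
  "tilde_over B = Inl ` B \<union> {Inr (b, y) | b y. b \<in> B}"

text \<open>Replacing each black vertex b of a walk w, b, w', ... by a path through the gadget of b
  between the ports of its two walk edges yields distinct self-avoiding walks of the replaced graph.\<close>
lemma tilde_saws_lower_step:
  assumes w: "w \<in> V" "\<not> chi w" "w \<notin> B"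
  shows "(\<Sum>b\<in>nbrs E w - B. \<Sum>w'\<in>nbrs E b - insert w B. \<Sum>seg\<in>paths_between Vg Eg (p (att b w)) (p (att b w')).
      if length seg + 1 \<le> n
      then real (card (saws_avoiding tV tE (tilde_over (insert b (insert w B))) (n - (length seg + 1)) (Inl w')))
      else 0)
    \<le> real (card (saws_avoiding tV tE (tilde_over B) n (Inl w)))"
proof -
  define Ss where "Ss b w' = {seg \<in> paths_between Vg Eg (p (att b w)) (p (att b w')). length seg + 1 \<le> n}"
    for b w'
  define R where "R b w' seg = saws_avoiding tV tE (tilde_over (insert b (insert w B))) (n - (length seg + 1)) (Inl w')"
    for b w' and seg :: "'c list"
  define I where "I = Sigma (nbrs E w - B) (\<lambda>b. Sigma (nbrs E b - insert w B) (Ss b))"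
  define T where "T = Sigma I (\<lambda>(b, w', seg). R b w' seg)"
  define join where "join = (\<lambda>((b, w' :: 'a, seg), r). Inl w # map (in_gadget b) seg @ r)"
  have fin_Ss: "finite (Ss b w')" for b w' unfolding Ss_def using finite_paths_between[OF finite_Vg] by simp
  have fin_I: "finite I" unfolding I_def by (rule sum_two_step_Sigma(1)[OF w(1) fin_Ss])
  have fin_R: "finite (R b w' seg)" for b w' seg
    unfolding R_def by (rule finite_saws_avoiding[OF simple_graph_tilde locally_finite_tilde])
  have "join ` T \<subseteq> saws_avoiding tV tE (tilde_over B) n (Inl w)"
  proof (rule image_subsetI)
    fix x assume "x \<in> T"
    then obtain b w' seg r where x: "x = ((b, w', seg), r)"
      and i: "b \<in> nbrs E w - B" "w' \<in> nbrs E b - insert w B" "seg \<in> Ss b w'" and r: "r \<in> R b w' seg"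
      unfolding T_def I_def by auto
    have seg: "seg \<in> paths_between Vg Eg (p (att b w)) (p (att b w'))" "length seg + 1 \<le> n"
      using i(3) unfolding Ss_def by auto
    have "Inl w # map (in_gadget b) seg @ r \<in> saws_avoiding tV tE (tilde_over B) (n - (length seg + 1) + length seg + 1) (Inl w)"
      using two_step_nbrs[OF w(2) i(1,2)] i r w seg(1)
      by (intro tilde_saw_join) (auto simp: R_def tilde_over_def)
    with seg(2) show "join x \<in> saws_avoiding tV tE (tilde_over B) n (Inl w)" by (simp add: x join_def)
  qed
  moreover have "inj_on join T"
  proof (rule inj_onI)
    fix x1 x2 assume x: "x1 \<in> T" "x2 \<in> T" and eq: "join x1 = join x2"
    obtain b1 w1 s1 r1 b2 w2 s2 r2 where x12: "x1 = ((b1, w1, s1), r1)" "x2 = ((b2, w2, s2), r2)"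
      by (metis prod.exhaust)
    have "r1 \<noteq> [] \<and> hd r1 = Inl w1" "r2 \<noteq> [] \<and> hd r2 = Inl w2" "s1 \<noteq> []"
      using x unfolding x12 T_def R_def I_def Ss_def saws_avoiding_def paths_between_def by auto
    with tilde_saw_join_inj[of b1 s1 r1 b2 s2 r2] eq show "x1 = x2" by (auto simp: x12 join_def)
  qed
  ultimately have "card T \<le> card (saws_avoiding tV tE (tilde_over B) n (Inl w))"
    by (metis card_image card_mono finite_saws_avoiding[OF simple_graph_tilde locally_finite_tilde])
  moreover have "card T = (\<Sum>i\<in>I. card ((\<lambda>(b, w', seg). R b w' seg) i))"
    unfolding T_def using fin_I fin_R by (intro card_SigmaI) (auto simp: split_beta)
  then have "real (card T) = (\<Sum>(b, w', seg)\<in>I. real (card (R b w' seg)))" by (simp add: split_beta)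
  moreover have "(\<Sum>(b, w', seg)\<in>I. real (card (R b w' seg))) = (\<Sum>b\<in>nbrs E w - B. \<Sum>w'\<in>nbrs E b - insert w B.
      \<Sum>seg\<in>paths_between Vg Eg (p (att b w)) (p (att b w')).
      if length seg + 1 \<le> n
      then real (card (saws_avoiding tV tE (tilde_over (insert b (insert w B))) (n - (length seg + 1)) (Inl w')))
      else 0)"
    unfolding I_def sum_two_step_Sigma(2)[OF w(1) fin_Ss] Ss_def R_def
    by (simp add: sum.inter_filter[OF finite_paths_between[OF finite_Vg]] cong: if_cong)
  ultimately show ?thesis by simp
qed

lemma sum_paths_between_att:
  fixes f :: "nat \<Rightarrow> real"
  assumes b: "b \<in> V" "chi b" "E b w" "E b w'" "w \<noteq> w'" and nn: "\<And>k. 0 \<le> f k"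
  shows "(\<Sum>seg\<in>paths_between Vg Eg (p (att b w)) (p (att b w')). f (length seg)) =
    (\<Sum>seg\<in>gadget_paths Vg Eg p. f (length seg))"
  using att_in_ports[OF b(1-3)] att_in_ports[OF b(1,2,4)] att_inj[OF b] nn
  by (intro sum_gadget_paths_between_ports[OF lt]) auto

lemma h_power_coeff_Suc_ports:
  assumes b: "b \<in> V" "chi b" "E b w" "E b w'" "w \<noteq> w'"
  shows "h_power_coeff (gadget_paths Vg Eg p) (Suc m) n =
    (\<Sum>seg\<in>paths_between Vg Eg (p (att b w)) (p (att b w')).
      if length seg + 1 \<le> n then h_power_coeff (gadget_paths Vg Eg p) m (n - (length seg + 1)) else 0)"
  using sum_paths_between_att[OF b, of "\<lambda>k. if k + 1 \<le> n then h_power_coeff (gadget_paths Vg Eg p) m (n - (k + 1)) else 0"]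
  by (simp add: h_power_coeff_nonneg)

lemma saws_mul_h_power_coeff_le:
  assumes "w \<in> V" "\<not> chi w"
  shows "real (card (saws_avoiding V E B (2 * m) w)) * h_power_coeff (gadget_paths Vg Eg p) m n
    \<le> real (card (saws_avoiding tV tE (tilde_over B) n (Inl w)))"
  using assms
proof (induction m arbitrary: n w B)
  case 0
  show ?case
  proof (cases "w \<in> B \<or> n \<noteq> 0")
    case False
    then have "Inl w \<notin> tilde_over B" unfolding tilde_over_def by auto
    with False "0.prems" show ?thesis by (simp add: saws_avoiding_0)
  qed (auto simp: saws_avoiding_0)
next
  case (Suc m)
  let ?GP = "gadget_paths Vg Eg p"
  show ?case
  proof (cases "w \<in> B")
    case False
    note edges = two_step_nbrs[OF Suc.prems(2)]
    have "real (card (saws_avoiding V E B (2 * Suc m) w)) * h_power_coeff ?GP (Suc m) n =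
        (\<Sum>b\<in>nbrs E w - B. \<Sum>w'\<in>nbrs E b - insert w B.
          real (card (saws_avoiding V E (insert b (insert w B)) (2 * m) w')) * h_power_coeff ?GP (Suc m) n)"
      using card_saws_avoiding_two_steps[OF sg lf Suc.prems(1) False, of "2 * m"]
      by (simp add: sum_distrib_right)
    also have "\<dots> = (\<Sum>b\<in>nbrs E w - B. \<Sum>w'\<in>nbrs E b - insert w B.
        \<Sum>seg\<in>paths_between Vg Eg (p (att b w)) (p (att b w')). if length seg + 1 \<le> n
        then real (card (saws_avoiding V E (insert b (insert w B)) (2 * m) w')) *
          h_power_coeff ?GP m (n - (length seg + 1)) else 0)"
    proof (intro sum.cong refl)
      fix b w' assume "b \<in> nbrs E w - B" "w' \<in> nbrs E b - insert w B"
      note ports = h_power_coeff_Suc_ports[OF edges(1-5)[OF this], of m n]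
      show "real (card (saws_avoiding V E (insert b (insert w B)) (2 * m) w')) * h_power_coeff ?GP (Suc m) n =
        (\<Sum>seg\<in>paths_between Vg Eg (p (att b w)) (p (att b w')). if length seg + 1 \<le> n
          then real (card (saws_avoiding V E (insert b (insert w B)) (2 * m) w')) *
            h_power_coeff ?GP m (n - (length seg + 1)) else 0)"
        unfolding ports sum_distrib_left by (intro sum.cong refl) simp
    qed
    also have "\<dots> \<le> (\<Sum>b\<in>nbrs E w - B. \<Sum>w'\<in>nbrs E b - insert w B.
        \<Sum>seg\<in>paths_between Vg Eg (p (att b w)) (p (att b w')). if length seg + 1 \<le> n
        then real (card (saws_avoiding tV tE (tilde_over (insert b (insert w B))) (n - (length seg + 1)) (Inl w')))
        else 0)"
      using edges Suc.IH by (intro sum_mono) auto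
    also have "\<dots> \<le> real (card (saws_avoiding tV tE (tilde_over B) n (Inl w)))"
      by (rule tilde_saws_lower_step[OF Suc.prems False])
    finally show ?thesis .
  qed (simp add: saws_avoiding_empty)
qed

lemma saw_count_mul_h_power_coeff_le:
  assumes "w \<in> V" "\<not> chi w"
  shows "saw_count V E w (2 * m) * h_power_coeff (gadget_paths Vg Eg p) m n \<le> saw_count tV tE (Inl w) n"
  using saws_mul_h_power_coeff_le[OF assms, of "{}"] by (simp add: tilde_over_def)

end

lemma exists_power_ge_affine:
  fixes q :: real
  assumes q: "0 < q" "q < 1"
  obtains m where "1 \<le> m" "real m * L + 1 \<le> (1 / q) ^ m"
proof -
  have "(\<lambda>m. L * (real m * q ^ m) + q ^ m) \<longlonglongrightarrow> L * 0 + 0"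
    using q by (intro tendsto_intros powser_times_n_limit_0 LIMSEQ_power_zero) auto
  then have "eventually (\<lambda>m. L * (real m * q ^ m) + q ^ m < 1) sequentially"
    by (intro order_tendstoD(2)) auto
  then have "eventually (\<lambda>m. 1 \<le> m \<and> L * (real m * q ^ m) + q ^ m < 1) sequentially"
    using eventually_ge_at_top[of 1] by (rule eventually_conj[rotated])
  then obtain m where m: "1 \<le> m" "L * (real m * q ^ m) + q ^ m < 1"
    using eventually_sequentially by auto
  then have "(real m * L + 1) * q ^ m < 1" by (simp add: algebra_simps)
  then have "real m * L + 1 < (1 / q) ^ m"
    using q by (simp add: power_one_over field_simps)
  with m(1) show thesis using that by simp
qed

lemma exists_term_ge_average:
  fixes f :: "nat \<Rightarrow> real"
  shows "\<exists>n\<le>N. (\<Sum>k\<le>N. f k) \<le> (real N + 1) * f n"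
proof (rule ccontr)
  assume "\<not> ?thesis"
  then have "(real N + 1) * f k < (\<Sum>j\<le>N. f j)" if "k \<le> N" for k
    using that by (meson not_le)
  then have "(\<Sum>k\<le>N. (real N + 1) * f k) < (\<Sum>k\<le>N. \<Sum>j\<le>N. f j)"
    by (intro sum_strict_mono) auto
  then show False by (simp add: sum_distrib_left add.commute)
qed

lemma exponential_lower_bound_from_multiples:
  fixes st :: "nat \<Rightarrow> real"
  assumes nn: "\<And>n. 0 \<le> st n" and sub: "\<And>N t. st (N + t) \<le> st N * (C * K ^ t)"
    and C: "1 \<le> C" "1 \<le> K" and n0: "0 < n0" and c1: "0 < c1" and \<rho>: "0 < \<rho>"
    and mult: "\<And>k. c1 * \<rho> ^ (k * n0) \<le> st (k * n0)"
  shows "\<exists>c>0. \<forall>N. c * \<rho> ^ N \<le> st N"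
proof (intro exI[of _ "c1 * (min 1 \<rho>) ^ n0 / (C * K ^ n0)"] conjI allI)
  show "0 < c1 * (min 1 \<rho>) ^ n0 / (C * K ^ n0)" using c1 \<rho> C by simp
  fix N
  define t where "t = (N div n0 + 1) * n0 - N"
  have "N div n0 * n0 + N mod n0 = N" "N mod n0 < n0" "(N div n0 + 1) * n0 = N div n0 * n0 + n0"
    using n0 by simp_all
  then have Nt: "(N div n0 + 1) * n0 = N + t" and t: "t \<le> n0" unfolding t_def by linarith+
  have "c1 * \<rho> ^ N * (min 1 \<rho>) ^ n0 \<le> c1 * \<rho> ^ N * \<rho> ^ t"
  proof (intro mult_left_mono)
    show "min 1 \<rho> ^ n0 \<le> \<rho> ^ t"
      using \<rho> t by (cases "1 \<le> \<rho>") (auto simp: min_def intro: one_le_power power_decreasing)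
  qed (use c1 \<rho> in auto)
  also have "\<dots> = c1 * \<rho> ^ (N + t)" by (simp add: power_add)
  also have "\<dots> \<le> st (N + t)" using mult[of "N div n0 + 1"] unfolding Nt .
  also have "\<dots> \<le> st N * (C * K ^ n0)"
    using sub[of N t] nn C t mult_left_mono[of "C * K ^ t" "C * K ^ n0" "st N"]
    by (simp add: power_increasing)
  finally show "c1 * (min 1 \<rho>) ^ n0 / (C * K ^ n0) * \<rho> ^ N \<le> st N"
    using C by (simp add: field_simps)
qed

text \<open>Some coefficient A m0 n0 carries at least the share 1/(m0 L + 1) of the total weight
  h(xc)^m0 = \<mu>^(-2 m0); since n0 \<ge> 3 m0, the surplus factor q^m0 absorbs this loss once
  (m0 L + 1) q^m0 \<le> 1.\<close>
lemma h_power_dominant_term: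
  fixes A :: "nat \<Rightarrow> nat \<Rightarrow> real"
  assumes q: "0 < q" "q < 1" and mu: "0 < \<mu>" and xc: "0 < xc"
    and A_gen: "\<And>m. (\<Sum>n\<le>m * L. A m n * xc ^ n) = inverse (\<mu>\<^sup>2) ^ m"
    and A_nn: "\<And>m n. 0 \<le> A m n" and A_0: "\<And>m n. n < 3 * m \<Longrightarrow> A m n = 0"
  obtains m0 n0 where "0 < n0" "(q / xc) ^ n0 \<le> (\<mu> * q) ^ (2 * m0) * A m0 n0"
proof -
  obtain m0 where m0: "1 \<le> m0" "real m0 * real L + 1 \<le> (1 / q) ^ m0"
    using exists_power_ge_affine[OF q, where L="real L"] by blast
  define D where "D = real (m0 * L) + 1"
  obtain n0 where "n0 \<le> m0 * L" and n0: "inverse (\<mu>\<^sup>2) ^ m0 \<le> D * (A m0 n0 * xc ^ n0)"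
    using exists_term_ge_average[where f="\<lambda>n. A m0 n * xc ^ n" and N="m0 * L"] A_gen unfolding D_def by auto
  have "0 < A m0 n0" using n0 A_nn[of m0 n0] mu xc unfolding D_def
    by (smt (verit) mult_eq_0_iff power_eq_0_iff zero_less_power inverse_positive_iff_positive)
  then have "3 * m0 \<le> n0" using A_0[of n0 m0] by linarith
  have "q ^ m0 * D \<le> 1"
    using m0(2) q mult_left_mono[of D "(1 / q) ^ m0" "q ^ m0"] unfolding D_def
    by (simp add: power_one_over)
  have "(q / xc) ^ n0 \<le> q ^ (2 * m0) * q ^ m0 / xc ^ n0"
    using \<open>3 * m0 \<le> n0\<close> q xc power_decreasing[of "3 * m0" n0 q]
    by (simp add: power_divide divide_right_mono flip: power_add)
  also have "\<dots> \<le> q ^ (2 * m0) * q ^ m0 / xc ^ n0 * (D * (\<mu> ^ (2 * m0) * A m0 n0 * xc ^ n0))"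
  proof -
    have "1 = inverse (\<mu>\<^sup>2) ^ m0 * \<mu> ^ (2 * m0)"
      using mu by (simp add: power_mult flip: power_mult_distrib)
    also have "\<dots> \<le> D * (A m0 n0 * xc ^ n0) * \<mu> ^ (2 * m0)" using n0 mu by (intro mult_right_mono) auto
    finally have "1 \<le> D * (\<mu> ^ (2 * m0) * A m0 n0 * xc ^ n0)" by (simp add: algebra_simps)
    moreover have "0 \<le> q ^ (2 * m0) * q ^ m0 / xc ^ n0" using q xc by simp
    ultimately show ?thesis by (metis mult_1_right mult_left_mono)
  qed
  also have "\<dots> = (\<mu> * q) ^ (2 * m0) * A m0 n0 * (q ^ m0 * D)"
    using xc by (simp add: power_mult_distrib field_simps)
  also have "\<dots> \<le> (\<mu> * q) ^ (2 * m0) * A m0 n0"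
    using \<open>q ^ m0 * D \<le> 1\<close> \<open>0 < A m0 n0\<close> mu q by (simp add: mult_le_cancel_left1)
  finally show thesis using \<open>3 * m0 \<le> n0\<close> m0(1) by (intro that) auto
qed

lemma lower_growth_from_h_powers:
  fixes s st :: "nat \<Rightarrow> real" and A :: "nat \<Rightarrow> nat \<Rightarrow> real"
  assumes mu: "1 \<le> \<mu>" and xc: "0 < xc"
    and s_low: "\<forall>\<eta>. 0 < \<eta> \<longrightarrow> \<eta> < \<mu> \<longrightarrow> (\<exists>c>0. \<forall>n. c * (\<mu> - \<eta>) ^ n \<le> s n)"
    and prod: "\<And>m n. s (2 * m) * A m n \<le> st n"
    and st_nn: "\<And>n. 0 \<le> st n" and st_sub: "\<And>N t. st (N + t) \<le> st N * (C * K ^ t)"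
    and C: "1 \<le> C" "1 \<le> K"
    and A_gen: "\<And>m. (\<Sum>n\<le>m * L. A m n * xc ^ n) = inverse (\<mu>\<^sup>2) ^ m"
    and A_nn: "\<And>m n. 0 \<le> A m n" and A_pow: "\<And>m n k. A m n ^ k \<le> A (k * m) (k * n)"
    and A_0: "\<And>m n. n < 3 * m \<Longrightarrow> A m n = 0"
  shows "\<forall>\<delta>. 0 < \<delta> \<longrightarrow> \<delta> < 1 / xc \<longrightarrow> (\<exists>c>0. \<forall>N. c * (1 / xc - \<delta>) ^ N \<le> st N)"
proof (intro allI impI)
  fix \<delta> :: real assume \<delta>: "0 < \<delta>" "\<delta> < 1 / xc"
  define q where "q = 1 - \<delta> * xc"
  have q: "0 < q" "q < 1" and \<rho>: "1 / xc - \<delta> = q / xc"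
    using \<delta> xc unfolding q_def by (auto simp: field_simps)
  have "0 < \<mu> * \<delta> * xc" "\<mu> * \<delta> * xc < \<mu>" using mu \<delta> xc by (auto simp: field_simps)
  then obtain c1 where c1: "0 < c1" "\<And>n. c1 * (\<mu> * q) ^ n \<le> s n"
    using s_low unfolding q_def by (force simp: algebra_simps)
  have "0 < \<mu>" using mu by simp
  then obtain m0 n0 where n0: "0 < n0" and key: "(q / xc) ^ n0 \<le> (\<mu> * q) ^ (2 * m0) * A m0 n0"
    using h_power_dominant_term[OF q _ xc A_gen A_nn A_0] by blast
  have "c1 * (q / xc) ^ (k * n0) \<le> st (k * n0)" for k
  proof -
    have "c1 * (q / xc) ^ (k * n0) = c1 * ((q / xc) ^ n0) ^ k" by (simp add: power_mult[symmetric] mult.commute)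
    also have "\<dots> \<le> c1 * ((\<mu> * q) ^ (2 * m0) * A m0 n0) ^ k"
      using key c1(1) xc q by (intro mult_left_mono power_mono) auto
    also have "\<dots> = c1 * (\<mu> * q) ^ (2 * (k * m0)) * A m0 n0 ^ k"
    proof -
      have "2 * (k * m0) = 2 * m0 * k" by simp
      then show ?thesis by (simp only: power_mult power_mult_distrib mult.assoc)
    qed
    also have "\<dots> \<le> s (2 * (k * m0)) * A (k * m0) (k * n0)"
      using c1 mu q A_nn A_pow by (intro mult_mono) (auto intro: order_trans[OF _ c1(2)])
    also have "\<dots> \<le> st (k * n0)" by (rule prod)
    finally show ?thesis .
  qed
  then show "\<exists>c>0. \<forall>N. c * (1 / xc - \<delta>) ^ N \<le> st N"
    unfolding \<rho> using q xc by (intro exponential_lower_bound_from_multiples[OF st_nn st_sub C n0 c1(1)]) auto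
qed

section \<open>Upper bound on the walks of the replaced graph\<close>

lemma card_le_sum_of_images:
  assumes "finite I" "finite J" "\<And>i. i \<in> I \<Longrightarrow> finite (A i)" "\<And>j. j \<in> J \<Longrightarrow> finite (B j)"
    and cover: "S \<subseteq> (\<Union>i\<in>I. f i ` A i) \<union> (\<Union>j\<in>J. g j ` B j)"
  shows "real (card S) \<le> (\<Sum>i\<in>I. real (card (A i))) + (\<Sum>j\<in>J. real (card (B j)))"
proof -
  have "card S \<le> card ((\<Union>i\<in>I. f i ` A i) \<union> (\<Union>j\<in>J. g j ` B j))"
    using assms by (intro card_mono[OF _ cover]) auto
  also have "\<dots> \<le> card (\<Union>i\<in>I. f i ` A i) + card (\<Union>j\<in>J. g j ` B j)" by (rule card_Un_le)
  also have "\<dots> \<le> (\<Sum>i\<in>I. card (f i ` A i)) + (\<Sum>j\<in>J. card (g j ` B j))"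
    using assms(1,2) by (intro add_mono card_UN_le)
  also have "\<dots> \<le> (\<Sum>i\<in>I. card (A i)) + (\<Sum>j\<in>J. card (B j))"
    using assms(3,4) by (intro add_mono sum_mono card_image_le)
  finally show ?thesis by (simp flip: of_nat_sum of_nat_add)
qed

lemma sum_card_length_le:
  fixes x :: real
  assumes "finite S" "0 \<le> x"
  shows "(\<Sum>n\<le>N. real (card {xs \<in> S. length xs = Suc n}) * x ^ Suc n) \<le> (\<Sum>xs\<in>S. x ^ length xs)"
proof -
  have "(\<Sum>n\<le>N. real (card {xs \<in> S. length xs = Suc n}) * x ^ Suc n) =
      (\<Sum>n\<le>N. \<Sum>xs\<in>S. if length xs = Suc n then x ^ length xs else 0)"
  proof (intro sum.cong refl)
    fix n
    have "(\<Sum>xs\<in>S. if length xs = Suc n then x ^ length xs else 0) = (\<Sum>xs\<in>{xs \<in> S. length xs = Suc n}. x ^ length xs)"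
      by (rule sum.inter_filter[symmetric, OF assms(1)])
    also have "\<dots> = (\<Sum>xs\<in>{xs \<in> S. length xs = Suc n}. x ^ Suc n)" by (rule sum.cong) auto
    also have "\<dots> = real (card {xs \<in> S. length xs = Suc n}) * x ^ Suc n" by simp
    finally show "real (card {xs \<in> S. length xs = Suc n}) * x ^ Suc n =
        (\<Sum>xs\<in>S. if length xs = Suc n then x ^ length xs else 0)" ..
  qed
  also have "\<dots> = (\<Sum>xs\<in>S. \<Sum>n\<le>N. if length xs = Suc n then x ^ length xs else 0)"
    by (rule sum.swap)
  also have "\<dots> \<le> (\<Sum>xs\<in>S. x ^ length xs)"
  proof (rule sum_mono)
    fix xs :: "'a list"
    show "(\<Sum>n\<le>N. if length xs = Suc n then x ^ length xs else 0) \<le> x ^ length xs"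
      using assms(2) by (cases "length xs") (simp_all add: sum.delta')
  qed
  finally show ?thesis .
qed

lemma sum_atMost_Suc_shift_if:
  fixes g :: "nat \<Rightarrow> real"
  assumes "1 \<le> l"
  shows "(\<Sum>n\<le>N. if l \<le> Suc n then g (Suc n - l) * x ^ Suc n else 0) =
    (if l \<le> Suc N then x ^ l * (\<Sum>n\<le>Suc N - l. g n * x ^ n) else 0)"
proof (cases "l \<le> Suc N")
  case True
  have "(\<Sum>n\<le>Suc N. if l \<le> n then g (n - l) * x ^ n else 0) =
      (\<Sum>n\<le>N. if l \<le> Suc n then g (Suc n - l) * x ^ Suc n else 0)"
    using assms by (subst sum.atMost_Suc_shift) simp
  with True sum_atMost_shift[OF True, of g x] show ?thesis by simp
qed (auto intro: sum.neutral)

abbreviation distinct_lists :: "'c set \<Rightarrow> 'c list set" where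
  "distinct_lists A \<equiv> {xs. set xs \<subseteq> A \<and> distinct xs}"

context gadget_replacement
begin

text \<open>The forbidden set A of the replaced graph blocks every walk through a vertex of B: a white
  vertex of B lies in A, and a black vertex of B has at most one port outside A, so that no walk
  can pass through its gadget.\<close>
definition blocks :: "('a + 'a \<times> 'c) set \<Rightarrow> 'a set \<Rightarrow> bool" where
  "blocks A B \<longleftrightarrow> (\<forall>u\<in>B. \<not> chi u \<longrightarrow> Inl u \<in> A) \<and>
     (\<forall>b\<in>B. chi b \<longrightarrow> (\<forall>w1 w2. E b w1 \<longrightarrow> E b w2 \<longrightarrow> w1 \<noteq> w2 \<longrightarrow>
        Inr (b, p (att b w1)) \<in> A \<or> Inr (b, p (att b w2)) \<in> A))"

lemma blocks_empty: "blocks A {}"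
  unfolding blocks_def by simp

lemma blocks_step:
  assumes A: "blocks A B" and w: "\<not> chi w" and b: "b \<in> V" "chi b" "E b w" "E b w'" "w \<noteq> w'"
    and seg: "seg \<in> paths_between Vg Eg (p (att b w)) (p (att b w'))"
  shows "blocks (A \<union> {Inl w} \<union> in_gadget b ` set seg) (insert b (insert w B))"
proof -
  let ?A = "A \<union> {Inl w} \<union> in_gadget b ` set seg"
  have "seg \<noteq> []" "hd seg = p (att b w)" "last seg = p (att b w')"
    using seg unfolding paths_between_def by auto
  then have ports: "in_gadget b (p (att b w)) \<in> ?A" "in_gadget b (p (att b w')) \<in> ?A"
    using hd_in_set last_in_set by fastforce+
  have gadget: "in_gadget b (p (att b w1)) \<in> ?A \<or> in_gadget b (p (att b w2)) \<in> ?A"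
    if "E b w1" "E b w2" "w1 \<noteq> w2" for w1 w2
  proof (rule ccontr)
    assume "\<not> ?thesis"
    with ports have "w1 \<noteq> w" "w1 \<noteq> w'" "w2 \<noteq> w" "w2 \<noteq> w'" by auto
    then have "card {w, w', w1, w2} = 4" using b(5) that(3) by auto
    moreover have "{w, w', w1, w2} \<subseteq> nbrs E b" using b that unfolding nbrs_def by auto
    ultimately have "4 \<le> card (nbrs E b)" by (metis card_mono finite_nbrs[OF b(1)])
    with deg3 b show False by auto
  qed
  show ?thesis unfolding blocks_def
  proof (intro conjI ballI impI allI)
    fix u assume "u \<in> insert b (insert w B)" "\<not> chi u"
    then show "Inl u \<in> ?A" using A b(2) unfolding blocks_def by auto
  next
    fix c w1 w2 assume c: "c \<in> insert b (insert w B)" "chi c" "E c w1" "E c w2" "w1 \<noteq> w2"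
    show "Inr (c, p (att c w1)) \<in> ?A \<or> Inr (c, p (att c w2)) \<in> ?A"
    proof (cases "c = b")
      case False
      then have "c \<in> B" using c(1,2) w by auto
      then show ?thesis using A c unfolding blocks_def by blast
    qed (use gadget c in simp)
  qed
qed

lemma tilde_saw_decompose:
  assumes w: "w \<in> V" "\<not> chi w" and A: "blocks A B" and \<pi>: "\<pi> \<in> saws_avoiding tV tE A (Suc n) (Inl w)"
  obtains (inside) b seg where "b \<in> nbrs E w" "seg \<in> distinct_lists Vg" "length seg = Suc n"
      "\<pi> = Inl w # map (in_gadget b) seg"
  | (through) b w' seg rest where "b \<in> nbrs E w - B" "w' \<in> nbrs E b - insert w B"
      "seg \<in> paths_between Vg Eg (p (att b w)) (p (att b w'))" "length seg + 1 \<le> Suc n"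
      "rest \<in> saws_avoiding tV tE (A \<union> {Inl w} \<union> in_gadget b ` set seg) (Suc n - (length seg + 1)) (Inl w')"
      "\<pi> = Inl w # map (in_gadget b) seg @ rest"
proof -
  obtain b \<pi>' where b: "E b w" "\<pi> = Inl w # \<pi>'"
    and \<pi>': "\<pi>' \<in> saws_avoiding tV tE (insert (Inl w) A) n (in_gadget b (p (att b w)))"
    using tilde_saw_first_step[OF \<pi>] by blast
  have bV: "b \<in> V" "chi b" "b \<in> nbrs E w" using black_white_edge[OF b(1) w(2)] unfolding nbrs_def by auto
  obtain seg rest where split: "\<pi>' = map (in_gadget b) seg @ rest" "seg \<noteq> []" "hd seg = p (att b w)"
      "distinct seg" "set seg \<subseteq> Vg" "successively Eg seg" "rest = [] \<longrightarrow> length seg = Suc n"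
      "rest \<noteq> [] \<longrightarrow> (\<exists>w'. E b w' \<and> w' \<in> V \<and> \<not> chi w' \<and> last seg = p (att b w') \<and> length seg \<le> n \<and>
        rest \<in> saws_avoiding tV tE (insert (Inl w) A \<union> in_gadget b ` set seg) (n - length seg) (Inl w'))"
    using tilde_saw_split_gadget[OF \<pi>'] by blast
  show thesis
  proof (cases "rest = []")
    case True
    with split b bV show thesis by (intro inside) auto
  next
    case False
    then obtain w' where w': "E b w'" "\<not> chi w'" "last seg = p (att b w')" "length seg \<le> n"
      and rest: "rest \<in> saws_avoiding tV tE (insert (Inl w) A \<union> in_gadget b ` set seg) (n - length seg) (Inl w')"
      using split(8) by blast
    have "set \<pi>' \<inter> insert (Inl w) A = {}" using \<pi>' unfolding saws_avoiding_def by auto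
    moreover have "in_gadget b (p (att b w)) \<in> set \<pi>'" "in_gadget b (p (att b w')) \<in> set \<pi>'"
      using split(1-3) w'(3) hd_in_set[OF split(2)] last_in_set[OF split(2)] by auto
    moreover have "Inl w' \<in> set rest" "set rest \<inter> insert (Inl w) A = {}"
      using rest unfolding saws_avoiding_def by (auto simp: length_Suc_conv)
    ultimately have "w' \<noteq> w" "w' \<notin> B" "b \<notin> B"
      using A w'(1,2) bV b(1) unfolding blocks_def by blast+
    moreover have "seg \<in> paths_between Vg Eg (p (att b w)) (p (att b w'))"
      using split w'(3) unfolding paths_between_def by auto
    moreover have "A \<union> {Inl w} \<union> in_gadget b ` set seg = insert (Inl w) A \<union> in_gadget b ` set seg" by auto
    ultimately show thesis
      using bV w'(1,4) rest b(2) split(1) by (intro through) (auto simp: nbrs_def)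
  qed
qed

lemma card_tilde_saws_white_le:
  assumes w: "w \<in> V" "\<not> chi w" and A: "blocks A B"
  shows "real (card (saws_avoiding tV tE A (Suc n) (Inl w))) \<le>
    real (card (nbrs E w)) * real (card {seg \<in> distinct_lists Vg. length seg = Suc n}) +
    (\<Sum>b\<in>nbrs E w - B. \<Sum>w'\<in>nbrs E b - insert w B. \<Sum>seg\<in>paths_between Vg Eg (p (att b w)) (p (att b w')).
       if length seg + 1 \<le> Suc n
       then real (card (saws_avoiding tV tE (A \<union> {Inl w} \<union> in_gadget b ` set seg) (Suc n - (length seg + 1)) (Inl w')))
       else 0)"
proof -
  define D where "D = {seg \<in> distinct_lists Vg. length seg = Suc n}"
  define Ss where "Ss b w' = {seg \<in> paths_between Vg Eg (p (att b w)) (p (att b w')). length seg + 1 \<le> Suc n}"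
    for b w'
  define R where "R = (\<lambda>(b, w', seg). saws_avoiding tV tE (A \<union> {Inl w} \<union> in_gadget b ` set seg)
    (Suc n - (length seg + 1)) (Inl w'))"
  define I where "I = Sigma (nbrs E w - B) (\<lambda>b. Sigma (nbrs E b - insert w B) (Ss b))"
  have fin_Ss: "finite (Ss b w')" for b w' unfolding Ss_def using finite_paths_between[OF finite_Vg] by simp
  have "real (card (saws_avoiding tV tE A (Suc n) (Inl w))) \<le>
      (\<Sum>b\<in>nbrs E w. real (card D)) + (\<Sum>i\<in>I. real (card (R i)))"
  proof (rule card_le_sum_of_images)
    show "finite I" unfolding I_def by (rule sum_two_step_Sigma(1)[OF w(1) fin_Ss])
    show "finite D" unfolding D_def by (rule finite_subset[OF _ finite_subset_distinct[OF finite_Vg]]) auto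
    show "finite (R i)" for i
      unfolding R_def by (simp add: finite_saws_avoiding[OF simple_graph_tilde locally_finite_tilde] split: prod.split)
    show "saws_avoiding tV tE A (Suc n) (Inl w) \<subseteq> (\<Union>b\<in>nbrs E w. (\<lambda>seg. Inl w # map (in_gadget b) seg) ` D) \<union>
        (\<Union>i\<in>I. (\<lambda>r. Inl w # map (in_gadget (fst i)) (snd (snd i)) @ r) ` R i)"
    proof
      fix \<pi> assume \<pi>: "\<pi> \<in> saws_avoiding tV tE A (Suc n) (Inl w)"
      show "\<pi> \<in> (\<Union>b\<in>nbrs E w. (\<lambda>seg. Inl w # map (in_gadget b) seg) ` D) \<union>
          (\<Union>i\<in>I. (\<lambda>r. Inl w # map (in_gadget (fst i)) (snd (snd i)) @ r) ` R i)"
      proof (rule tilde_saw_decompose[OF w A \<pi>])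
        fix b seg assume "b \<in> nbrs E w" "seg \<in> distinct_lists Vg" "length seg = Suc n"
          "\<pi> = Inl w # map (in_gadget b) seg"
        then show ?thesis unfolding D_def by blast
      next
        fix b w' seg rest assume through: "b \<in> nbrs E w - B" "w' \<in> nbrs E b - insert w B"
          "seg \<in> paths_between Vg Eg (p (att b w)) (p (att b w'))" "length seg + 1 \<le> Suc n"
          "rest \<in> saws_avoiding tV tE (A \<union> {Inl w} \<union> in_gadget b ` set seg) (Suc n - (length seg + 1)) (Inl w')"
          "\<pi> = Inl w # map (in_gadget b) seg @ rest"
        then have "(b, w', seg) \<in> I" "rest \<in> R (b, w', seg)" unfolding I_def Ss_def R_def by auto
        with through(6) show ?thesis by force
      qed
    qed
  qed (use finite_nbrs[OF w(1)] in auto)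
  also have "(\<Sum>i\<in>I. real (card (R i))) =
      (\<Sum>b\<in>nbrs E w - B. \<Sum>w'\<in>nbrs E b - insert w B. \<Sum>seg\<in>Ss b w'. real (card (R (b, w', seg))))"
    unfolding I_def using sum_two_step_Sigma(2)[OF w(1) fin_Ss, of "\<lambda>b w' seg. real (card (R (b, w', seg)))"]
    by (simp add: split_beta)
  finally show ?thesis
    unfolding D_def Ss_def R_def
    by (simp add: sum.inter_filter[OF finite_paths_between[OF finite_Vg]] cong: if_cong)
qed

end

context gadget_replacement
begin

definition tilde_partial_gf :: "('a + 'a \<times> 'c) set \<Rightarrow> 'a \<Rightarrow> real \<Rightarrow> nat \<Rightarrow> real" where
  "tilde_partial_gf A w x N = (\<Sum>n\<le>N. real (card (saws_avoiding tV tE A n (Inl w))) * x ^ n)"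

definition even_partial_gf :: "'a set \<Rightarrow> 'a \<Rightarrow> real \<Rightarrow> nat \<Rightarrow> real" where
  "even_partial_gf B w y N = (\<Sum>m\<le>N. real (card (saws_avoiding V E B (2 * m) w)) * y ^ m)"

lemma even_partial_gf_mono:
  "0 \<le> y \<Longrightarrow> M \<le> N \<Longrightarrow> even_partial_gf B w y M \<le> even_partial_gf B w y N"
  unfolding even_partial_gf_def by (intro sum_mono2) auto

lemma even_partial_gf_nonneg: "0 \<le> y \<Longrightarrow> 0 \<le> even_partial_gf B w y N"
  unfolding even_partial_gf_def by (intro sum_nonneg) auto

lemma tilde_partial_gf_shift_le:
  assumes "0 \<le> x" "0 \<le> Y" "tilde_partial_gf A w x (Suc N - (l + 1)) \<le> Y"
  shows "(\<Sum>n\<le>N. if l + 1 \<le> Suc n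
      then real (card (saws_avoiding tV tE A (Suc n - (l + 1)) (Inl w))) * x ^ Suc n else 0) \<le> x ^ (l + 1) * Y"
proof -
  have "(\<Sum>n\<le>N. if l + 1 \<le> Suc n
      then real (card (saws_avoiding tV tE A (Suc n - (l + 1)) (Inl w))) * x ^ Suc n else 0) =
      (if l + 1 \<le> Suc N then x ^ (l + 1) * tilde_partial_gf A w x (Suc N - (l + 1)) else 0)"
    unfolding tilde_partial_gf_def by (rule sum_atMost_Suc_shift_if) simp
  also have "\<dots> \<le> x ^ (l + 1) * Y" using assms by (auto intro: mult_left_mono)
  finally show ?thesis .
qed

lemma tilde_partial_gf_through_le:
  fixes x K :: real
  defines "h \<equiv> h_series (gadget_paths Vg Eg p) x"
  assumes x: "0 \<le> x" and K: "1 \<le> K" and w: "w \<in> V" "\<not> chi w" "w \<notin> B" and A: "blocks A B"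
    and IH: "\<And>A' B' w' M. M \<le> N \<Longrightarrow> w' \<in> V \<Longrightarrow> \<not> chi w' \<Longrightarrow> blocks A' B' \<Longrightarrow>
        tilde_partial_gf A' w' x M \<le> K * even_partial_gf B' w' h M"
  shows "(\<Sum>n\<le>N. (\<Sum>b\<in>nbrs E w - B. \<Sum>w'\<in>nbrs E b - insert w B.
      \<Sum>seg\<in>paths_between Vg Eg (p (att b w)) (p (att b w')). if length seg + 1 \<le> Suc n
      then real (card (saws_avoiding tV tE (A \<union> {Inl w} \<union> in_gadget b ` set seg) (Suc n - (length seg + 1)) (Inl w')))
      else 0) * x ^ Suc n)
    \<le> K * (\<Sum>m\<le>N. real (card (saws_avoiding V E B (2 * Suc m) w)) * h ^ Suc m)"
    (is "?lhs \<le> _")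
proof -
  define A' where "A' b seg = A \<union> {Inl w} \<union> in_gadget b ` set seg" for b and seg :: "'c list"
  define B' where "B' b = insert b (insert w B)" for b
  have h: "0 \<le> h" unfolding h_def h_series_def using x by (intro sum_nonneg) auto
  note edges = two_step_nbrs[OF w(2)]
  have "?lhs = (\<Sum>b\<in>nbrs E w - B. \<Sum>w'\<in>nbrs E b - insert w B.
      \<Sum>seg\<in>paths_between Vg Eg (p (att b w)) (p (att b w')). \<Sum>n\<le>N.
      if length seg + 1 \<le> Suc n
      then real (card (saws_avoiding tV tE (A' b seg) (Suc n - (length seg + 1)) (Inl w'))) * x ^ Suc n else 0)"
    unfolding A'_def sum_distrib_right
    by (subst sum.swap, rule sum.cong[OF refl], subst sum.swap, rule sum.cong[OF refl], subst sum.swap)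
      (auto intro!: sum.cong)
  also have "\<dots> \<le> (\<Sum>b\<in>nbrs E w - B. \<Sum>w'\<in>nbrs E b - insert w B.
      \<Sum>seg\<in>paths_between Vg Eg (p (att b w)) (p (att b w')). x ^ (length seg + 1) * (K * even_partial_gf (B' b) w' h N))"
  proof (intro sum_mono)
    fix b w' seg assume bw: "b \<in> nbrs E w - B" "w' \<in> nbrs E b - insert w B"
      and seg: "seg \<in> paths_between Vg Eg (p (att b w)) (p (att b w'))"
    have "blocks (A' b seg) (B' b)"
      unfolding A'_def B'_def using edges[OF bw] by (intro blocks_step[OF A w(2) _ _ _ _ _ seg]) auto
    moreover have "Suc N - (length seg + 1) \<le> N" by simp
    ultimately have "tilde_partial_gf (A' b seg) w' x (Suc N - (length seg + 1)) \<le>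
        K * even_partial_gf (B' b) w' h (Suc N - (length seg + 1))"
      using IH edges[OF bw] by blast
    also have "\<dots> \<le> K * even_partial_gf (B' b) w' h N"
      using K h by (intro mult_left_mono even_partial_gf_mono) auto
    finally show "(\<Sum>n\<le>N. if length seg + 1 \<le> Suc n
        then real (card (saws_avoiding tV tE (A' b seg) (Suc n - (length seg + 1)) (Inl w'))) * x ^ Suc n else 0)
        \<le> x ^ (length seg + 1) * (K * even_partial_gf (B' b) w' h N)"
      using x K h even_partial_gf_nonneg[OF h] by (intro tilde_partial_gf_shift_le) auto
  qed
  also have "\<dots> = (\<Sum>b\<in>nbrs E w - B. \<Sum>w'\<in>nbrs E b - insert w B. h * (K * even_partial_gf (B' b) w' h N))"
  proof (intro sum.cong refl)
    fix b w' assume bw: "b \<in> nbrs E w - B" "w' \<in> nbrs E b - insert w B"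
    have "(\<Sum>seg\<in>paths_between Vg Eg (p (att b w)) (p (att b w')). x ^ (length seg + 1)) = h"
      unfolding h_def h_series_def using x by (intro sum_paths_between_att[OF edges(1-5)[OF bw]]) auto
    then show "(\<Sum>seg\<in>paths_between Vg Eg (p (att b w)) (p (att b w')). x ^ (length seg + 1) * (K * even_partial_gf (B' b) w' h N))
        = h * (K * even_partial_gf (B' b) w' h N)"
      by (simp only: sum_distrib_right[symmetric])
  qed
  also have "\<dots> = K * (\<Sum>m\<le>N. h ^ Suc m * (\<Sum>b\<in>nbrs E w - B. \<Sum>w'\<in>nbrs E b - insert w B.
      real (card (saws_avoiding V E (B' b) (2 * m) w'))))"
    unfolding even_partial_gf_def sum_distrib_left sum_distrib_right
    by (subst sum.swap, rule sum.cong[OF refl], subst sum.swap) (auto intro!: sum.cong simp: algebra_simps)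
  also have "\<dots> = K * (\<Sum>m\<le>N. real (card (saws_avoiding V E B (2 * Suc m) w)) * h ^ Suc m)"
    using card_saws_avoiding_two_steps[OF sg lf w(1,3)] unfolding B'_def by (simp add: mult.commute)
  finally show ?thesis .
qed

lemma tilde_partial_gf_le:
  fixes x D :: real
  defines "h \<equiv> h_series (gadget_paths Vg Eg p) x"
    and "K \<equiv> 1 + D * (\<Sum>seg\<in>distinct_lists Vg. x ^ length seg)"
  assumes x: "0 \<le> x" and D: "0 \<le> D" "\<forall>v\<in>V. real (card (nbrs E v)) \<le> D"
  shows "w \<in> V \<Longrightarrow> \<not> chi w \<Longrightarrow> blocks A B \<Longrightarrow> tilde_partial_gf A w x N \<le> K * even_partial_gf B w h N"
proof (induction N arbitrary: w A B rule: less_induct)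
  case (less N)
  have Q: "0 \<le> (\<Sum>seg\<in>distinct_lists Vg. x ^ length seg)" using x by (intro sum_nonneg) auto
  have K: "1 \<le> K" unfolding K_def using Q D by simp
  have h: "0 \<le> h" unfolding h_def h_series_def using x by (intro sum_nonneg) auto
  show ?case
  proof (cases "w \<in> B")
    case True
    then have "Inl w \<in> A" using less.prems unfolding blocks_def by auto
    then show ?thesis
      using K h even_partial_gf_nonneg[OF h]
      by (simp add: tilde_partial_gf_def saws_avoiding_empty)
  next
    case False
    have first: "real (card (saws_avoiding tV tE A 0 (Inl w))) * x ^ 0 \<le> 1" by (simp add: saws_avoiding_0)
    have base: "even_partial_gf B w h 0 = 1"
      using less.prems(1) False by (simp add: even_partial_gf_def saws_avoiding_0)
    show ?thesis
    proof (cases N)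
      case 0
      with first base K show ?thesis by (simp add: tilde_partial_gf_def)
    next
      case (Suc N')
      define T where "T n = (\<Sum>b\<in>nbrs E w - B. \<Sum>w'\<in>nbrs E b - insert w B.
        \<Sum>seg\<in>paths_between Vg Eg (p (att b w)) (p (att b w')). if length seg + 1 \<le> Suc n
        then real (card (saws_avoiding tV tE (A \<union> {Inl w} \<union> in_gadget b ` set seg) (Suc n - (length seg + 1)) (Inl w')))
        else 0)" for n
      define Dn where "Dn n = real (card {seg \<in> distinct_lists Vg. length seg = Suc n})" for n
      have "tilde_partial_gf A w x N \<le> 1 + (\<Sum>n\<le>N'. (real (card (nbrs E w)) * Dn n + T n) * x ^ Suc n)"
        unfolding tilde_partial_gf_def Suc sum.atMost_Suc_shift T_def Dn_def
        using first x card_tilde_saws_white_le[OF less.prems(1,2,3)]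
        by (intro add_mono sum_mono mult_right_mono) auto
      also have "\<dots> = 1 + real (card (nbrs E w)) * (\<Sum>n\<le>N'. Dn n * x ^ Suc n) + (\<Sum>n\<le>N'. T n * x ^ Suc n)"
        by (simp add: sum.distrib sum_distrib_left algebra_simps)
      also have "\<dots> \<le> 1 + D * (\<Sum>seg\<in>distinct_lists Vg. x ^ length seg) +
          K * (\<Sum>m\<le>N'. real (card (saws_avoiding V E B (2 * Suc m) w)) * h ^ Suc m)"
      proof (intro add_mono order_refl mult_mono)
        show "real (card (nbrs E w)) \<le> D" using D less.prems(1) by blast
        show "(\<Sum>n\<le>N'. Dn n * x ^ Suc n) \<le> (\<Sum>seg\<in>distinct_lists Vg. x ^ length seg)"
          unfolding Dn_def using sum_card_length_le[OF finite_subset_distinct[OF finite_Vg] x] by simp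
        show "(\<Sum>n\<le>N'. T n * x ^ Suc n) \<le> K * (\<Sum>m\<le>N'. real (card (saws_avoiding V E B (2 * Suc m) w)) * h ^ Suc m)"
          unfolding T_def h_def
          by (rule tilde_partial_gf_through_le[OF x K less.prems(1,2) False less.prems(3)])
            (use less.IH Suc in \<open>auto simp: h_def K_def\<close>)
      qed (use D x Dn_def in \<open>auto intro: sum_nonneg\<close>)
      also have "\<dots> \<le> K * (1 + (\<Sum>m\<le>N'. real (card (saws_avoiding V E B (2 * Suc m) w)) * h ^ Suc m))"
        unfolding K_def by (simp add: algebra_simps)
      also have "\<dots> = K * even_partial_gf B w h N"
        using base unfolding even_partial_gf_def Suc sum.atMost_Suc_shift by simp
      finally show ?thesis .
    qed
  qed
qed

end

lemma card_saws_avoiding_1: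
  assumes sg: "simple_graph V E" and lf: "locally_finite V E" and v: "v \<in> V"
  shows "card (saws_avoiding V E {} 1 v) = card (nbrs E v)"
proof -
  have "card (saws_avoiding V E {v} 0 u) = 1" if "u \<in> nbrs E v" for u
    using that simple_graph_in_verts[OF sg] simple_graph_irrefl[OF sg]
    unfolding nbrs_def by (auto simp: saws_avoiding_0)
  then show ?thesis using card_saws_avoiding_Suc[OF sg lf v, of "{}" 0] by simp
qed

lemma uniform_growth_bound_degree:
  assumes sg: "simple_graph V E" and lf: "locally_finite V E" and up: "uniform_growth_bound V E \<mu>"
    and mu: "0 \<le> \<mu>"
  obtains D where "0 \<le> D" "\<forall>v\<in>V. real (card (nbrs E v)) \<le> D"
proof -
  have "(0::real) < 1" by simp
  then obtain C where C: "1 \<le> C" "\<And>u j. saw_count V E u j \<le> C * (\<mu> + 1) ^ j"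
    using uniform_growth_boundE[OF up _ mu] by blast
  have "real (card (nbrs E v)) \<le> C * (\<mu> + 1)" if "v \<in> V" for v
    using card_saws_avoiding_1[OF sg lf that] C(2)[where u=v and j=1] by simp
  moreover have "0 \<le> C * (\<mu> + 1)" using C(1) mu by simp
  ultimately show thesis using that by blast
qed

context gadget_replacement
begin

lemma even_partial_gf_bounded:
  assumes mu: "1 \<le> \<mu>" and up: "uniform_growth_bound V E \<mu>" and h: "0 \<le> h" "\<mu>\<^sup>2 * h < 1"
  obtains Z where "\<And>w B N. w \<in> V \<Longrightarrow> even_partial_gf B w h N \<le> Z"
proof -
  define e where "e = min 1 ((1 - \<mu>\<^sup>2 * h) / (6 * \<mu>))"
  have e: "0 < e" "e \<le> 1" "e * (3 * \<mu>) \<le> (1 - \<mu>\<^sup>2 * h) / 2"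
    using h mu unfolding e_def by (auto simp: min_def field_simps)
  define q where "q = (\<mu> + e)\<^sup>2 * h"
  have "(\<mu> + e)\<^sup>2 \<le> \<mu>\<^sup>2 + e * (3 * \<mu>)"
    using e mu by (simp add: power2_eq_square algebra_simps mult_left_mono)
  then have "q \<le> (\<mu>\<^sup>2 + e * (3 * \<mu>)) * h" unfolding q_def using h by (intro mult_right_mono)
  also have "\<dots> = \<mu>\<^sup>2 * h + e * (3 * \<mu>) * h" by (simp add: algebra_simps)
  also have "\<dots> \<le> \<mu>\<^sup>2 * h + e * (3 * \<mu>)"
  proof -
    have "h \<le> \<mu>\<^sup>2 * h" using mu h by (simp add: mult_le_cancel_right1 one_le_power)
    then have "h \<le> 1" using h by linarith
    then show ?thesis using e mu by (simp add: mult_left_le)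
  qed
  finally have q: "0 \<le> q" "q < 1" using e(3) h unfolding q_def by auto
  obtain C where C: "1 \<le> C" "\<And>u j. saw_count V E u j \<le> C * (\<mu> + e) ^ j"
    using uniform_growth_boundE[OF up e(1)] mu by auto
  have "even_partial_gf B w h N \<le> C / (1 - q)" if "w \<in> V" for w B N
  proof -
    have "even_partial_gf B w h N \<le> (\<Sum>m\<le>N. C * q ^ m)"
      unfolding even_partial_gf_def
    proof (rule sum_mono)
      fix m
      have "real (card (saws_avoiding V E B (2 * m) w)) \<le> saw_count V E w (2 * m)"
        using card_saws_avoiding_antimono[OF sg lf, of "{}" B] by simp
      also have "\<dots> \<le> C * ((\<mu> + e)\<^sup>2) ^ m" using C(2)[where u=w and j="2 * m"] by (simp add: power_mult)
      finally have "real (card (saws_avoiding V E B (2 * m) w)) * h ^ m \<le> C * ((\<mu> + e)\<^sup>2) ^ m * h ^ m"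
        using h by (intro mult_right_mono) auto
      then show "real (card (saws_avoiding V E B (2 * m) w)) * h ^ m \<le> C * q ^ m"
        unfolding q_def by (simp add: power_mult_distrib mult.assoc)
    qed
    also have "\<dots> = C * (\<Sum>m\<le>N. q ^ m)" by (simp add: sum_distrib_left)
    also have "(\<Sum>m\<le>N. q ^ m) = (1 - q ^ Suc N) / (1 - q)"
      using q sum_gp_strict[of q "Suc N"] by (simp add: lessThan_Suc_atMost)
    also have "C * \<dots> \<le> C * (1 / (1 - q))"
      using q C(1) by (intro mult_left_mono divide_right_mono) auto
    finally show ?thesis by simp
  qed
  then show thesis using that by blast
qed

end

context gadget_replacement
begin

lemma card_tilde_saws_black_le:
  assumes b: "b \<in> V" "chi b"
  shows "real (card (saws_avoiding tV tE {} n (in_gadget b y))) \<le>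
    real (card {seg \<in> distinct_lists Vg. length seg = Suc n}) +
    (\<Sum>w\<in>nbrs E b. \<Sum>seg\<in>{seg \<in> distinct_lists Vg. length seg \<le> n}.
      real (card (saws_avoiding tV tE (in_gadget b ` set seg) (n - length seg) (Inl w))))"
proof -
  define Dn where "Dn = {seg \<in> distinct_lists Vg. length seg \<le> n}"
  define R where "R = (\<lambda>(w, seg). saws_avoiding tV tE (in_gadget b ` set seg) (n - length seg) (Inl w))"
  have fin_D: "finite {seg \<in> distinct_lists Vg. P seg}" for P
    by (rule finite_subset[OF _ finite_subset_distinct[OF finite_Vg]]) auto
  have "real (card (saws_avoiding tV tE {} n (in_gadget b y))) \<le>
      (\<Sum>i\<in>{b}. real (card {seg \<in> distinct_lists Vg. length seg = Suc n})) + (\<Sum>i\<in>nbrs E b \<times> Dn. real (card (R i)))"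
  proof (rule card_le_sum_of_images)
    show "finite (nbrs E b \<times> Dn)" unfolding Dn_def using finite_nbrs[OF b(1)] fin_D by simp
    show "finite (R i)" for i
      unfolding R_def by (simp add: finite_saws_avoiding[OF simple_graph_tilde locally_finite_tilde] split: prod.split)
    show "saws_avoiding tV tE {} n (in_gadget b y) \<subseteq> (\<Union>i\<in>{b}. map (in_gadget b) ` {seg \<in> distinct_lists Vg. length seg = Suc n}) \<union>
        (\<Union>i\<in>nbrs E b \<times> Dn. (\<lambda>r. map (in_gadget b) (snd i) @ r) ` R i)"
    proof
      fix \<pi> assume "\<pi> \<in> saws_avoiding tV tE {} n (in_gadget b y)"
      from tilde_saw_split_gadget[OF this] obtain seg rest where
        split: "\<pi> = map (in_gadget b) seg @ rest" "distinct seg" "set seg \<subseteq> Vg" "rest = [] \<longrightarrow> length seg = Suc n"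
        "rest \<noteq> [] \<longrightarrow> (\<exists>w'. E b w' \<and> w' \<in> V \<and> \<not> chi w' \<and> last seg = p (att b w') \<and> length seg \<le> n \<and>
          rest \<in> saws_avoiding tV tE ({} \<union> in_gadget b ` set seg) (n - length seg) (Inl w'))"
        by blast
      show "\<pi> \<in> (\<Union>i\<in>{b}. map (in_gadget b) ` {seg \<in> distinct_lists Vg. length seg = Suc n}) \<union>
          (\<Union>i\<in>nbrs E b \<times> Dn. (\<lambda>r. map (in_gadget b) (snd i) @ r) ` R i)"
      proof (cases "rest = []")
        case True
        with split show ?thesis by auto
      next
        case False
        with split obtain w' where "E b w'" "length seg \<le> n"
          "rest \<in> saws_avoiding tV tE (in_gadget b ` set seg) (n - length seg) (Inl w')" by auto
        with split(1-3) have "(w', seg) \<in> nbrs E b \<times> Dn" "rest \<in> R (w', seg)" "\<pi> = map (in_gadget b) seg @ rest"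
          unfolding Dn_def R_def nbrs_def by auto
        then show ?thesis by force
      qed
    qed
  qed (use fin_D in auto)
  also have "(\<Sum>i\<in>nbrs E b \<times> Dn. real (card (R i))) =
      (\<Sum>w\<in>nbrs E b. \<Sum>seg\<in>Dn. real (card (saws_avoiding tV tE (in_gadget b ` set seg) (n - length seg) (Inl w))))"
    unfolding R_def Dn_def using finite_nbrs[OF b(1)] fin_D by (simp add: sum.cartesian_product split_beta)
  finally show ?thesis unfolding Dn_def by simp
qed

lemma tilde_white_weighted_le:
  fixes x :: real
  assumes x: "0 \<le> x" and D: "0 \<le> D" "\<forall>v\<in>V. real (card (nbrs E v)) \<le> D"
    and Z: "\<And>N. even_partial_gf {} w (h_series (gadget_paths Vg Eg p) x) N \<le> Z"
    and w: "w \<in> V" "\<not> chi w"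
  shows "real (card (saws_avoiding tV tE A n (Inl w))) * x ^ n \<le> (1 + D * (\<Sum>seg\<in>distinct_lists Vg. x ^ length seg)) * Z"
proof -
  have "real (card (saws_avoiding tV tE A n (Inl w))) * x ^ n \<le> tilde_partial_gf A w x n"
    unfolding tilde_partial_gf_def using x by (intro member_le_sum) auto
  also have "\<dots> \<le> (1 + D * (\<Sum>seg\<in>distinct_lists Vg. x ^ length seg)) * even_partial_gf {} w (h_series (gadget_paths Vg Eg p) x) n"
    by (rule tilde_partial_gf_le[OF x D w blocks_empty])
  also have "\<dots> \<le> (1 + D * (\<Sum>seg\<in>distinct_lists Vg. x ^ length seg)) * Z"
    using Z D x by (intro mult_left_mono) (auto intro!: add_nonneg_nonneg mult_nonneg_nonneg sum_nonneg)
  finally show ?thesis .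
qed

lemma tilde_black_weighted_le:
  fixes x :: real
  assumes x: "0 \<le> x" "x \<le> 1" and b: "b \<in> V" "chi b" and M: "0 \<le> M"
    and white: "\<And>w A m. w \<in> nbrs E b \<Longrightarrow> real (card (saws_avoiding tV tE A m (Inl w))) * x ^ m \<le> M"
  shows "saw_count tV tE (in_gadget b y) n * x ^ n \<le> real (card (distinct_lists Vg)) * (1 + 3 * M)"
proof -
  define cD where "cD = real (card (distinct_lists Vg))"
  have card_le_cD: "real (card {seg \<in> distinct_lists Vg. P seg}) \<le> cD" for P
    unfolding cD_def by (intro of_nat_mono card_mono finite_subset_distinct[OF finite_Vg]) auto
  have "saw_count tV tE (in_gadget b y) n * x ^ n \<le> (real (card {seg \<in> distinct_lists Vg. length seg = Suc n}) +
      (\<Sum>w\<in>nbrs E b. \<Sum>seg\<in>{seg \<in> distinct_lists Vg. length seg \<le> n}.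
        real (card (saws_avoiding tV tE (in_gadget b ` set seg) (n - length seg) (Inl w))))) * x ^ n"
    using card_tilde_saws_black_le[OF b, of n y] x by (intro mult_right_mono) auto
  also have "\<dots> \<le> cD + (\<Sum>w\<in>nbrs E b. \<Sum>seg\<in>{seg \<in> distinct_lists Vg. length seg \<le> n}. M)"
  proof (unfold distrib_right sum_distrib_right, intro add_mono sum_mono)
    have "x ^ n \<le> 1" using x by (simp add: power_le_one)
    then show "real (card {seg \<in> distinct_lists Vg. length seg = Suc n}) * x ^ n \<le> cD"
      using card_le_cD[of "\<lambda>seg. length seg = Suc n"] by (meson mult_left_le of_nat_0_le_iff order_trans)
    fix w seg assume w: "w \<in> nbrs E b" and seg: "seg \<in> {seg \<in> distinct_lists Vg. length seg \<le> n}"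
    have "x ^ n = x ^ length seg * x ^ (n - length seg)" using seg by (simp flip: power_add)
    also have "\<dots> \<le> x ^ (n - length seg)" using x by (simp add: mult_left_le_one_le power_le_one)
    finally have "real (card (saws_avoiding tV tE (in_gadget b ` set seg) (n - length seg) (Inl w))) * x ^ n
        \<le> real (card (saws_avoiding tV tE (in_gadget b ` set seg) (n - length seg) (Inl w))) * x ^ (n - length seg)"
      by (intro mult_left_mono) auto
    also have "\<dots> \<le> M" by (rule white[OF w])
    finally show "real (card (saws_avoiding tV tE (in_gadget b ` set seg) (n - length seg) (Inl w))) * x ^ n \<le> M" .
  qed
  also have "\<dots> = cD + real (card (nbrs E b)) * real (card {seg \<in> distinct_lists Vg. length seg \<le> n}) * M"
    by simp
  also have "\<dots> \<le> cD + 3 * cD * M"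
    using deg3 b card_le_cD M by (intro add_left_mono mult_right_mono) auto
  finally show ?thesis unfolding cD_def by (simp add: algebra_simps)
qed

lemma tilde_saw_count_weighted_bounded:
  fixes x :: real
  assumes mu: "1 \<le> \<mu>" and up: "uniform_growth_bound V E \<mu>" and x: "0 \<le> x" "x \<le> 1"
    and hx: "h_series (gadget_paths Vg Eg p) x < inverse (\<mu>\<^sup>2)"
  obtains M where "\<And>u n. saw_count tV tE u n * x ^ n \<le> M"
proof -
  let ?h = "h_series (gadget_paths Vg Eg p) x"
  obtain D where D: "0 \<le> D" "\<forall>v\<in>V. real (card (nbrs E v)) \<le> D"
    using uniform_growth_bound_degree[OF sg lf up] mu by auto
  have h: "0 \<le> ?h" "\<mu>\<^sup>2 * ?h < 1"
    using hx mu x by (auto simp: h_series_def field_simps intro: sum_nonneg)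
  obtain Z where Z: "\<And>w B N. w \<in> V \<Longrightarrow> even_partial_gf B w ?h N \<le> Z"
    using even_partial_gf_bounded[OF mu up h] by blast
  define M where "M = (1 + D * (\<Sum>seg\<in>distinct_lists Vg. x ^ length seg)) * max 0 Z"
  have "0 \<le> M" unfolding M_def using D x by (intro mult_nonneg_nonneg add_nonneg_nonneg sum_nonneg) auto
  have white: "real (card (saws_avoiding tV tE A n (Inl w))) * x ^ n \<le> M" if "w \<in> V" "\<not> chi w" for w A n
    unfolding M_def by (intro tilde_white_weighted_le[OF x(1) D _ that] order_trans[OF Z[OF that(1)]]) simp
  have "saw_count tV tE u n * x ^ n \<le> max M (real (card (distinct_lists Vg)) * (1 + 3 * M))" for u n
  proof (cases "u \<in> tV")
    case True
    then consider w where "u = Inl w" "w \<in> V" "\<not> chi w" | b y where "u = in_gadget b y" "b \<in> V" "chi b"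
      unfolding tilde_V_def by auto
    then show ?thesis
    proof cases
      case 1
      then show ?thesis using white[where w=w and A="{}" and n=n] by auto
    next
      case 2
      have "w \<in> V" "\<not> chi w" if "w \<in> nbrs E b" for w
        using that 2 edge_colours nbrs_in_V unfolding nbrs_def by auto
      with 2 show ?thesis using tilde_black_weighted_le[OF x 2(2,3) \<open>0 \<le> M\<close> white, where y=y and n=n] by auto
    qed
  qed (use \<open>0 \<le> M\<close> in \<open>simp add: saws_avoiding_empty\<close>)
  then show thesis by (rule that)
qed

end

lemma h_series_gadget_paths: "h_series (gadget_paths Vg Eg p) x = x * gadget_series Vg Eg p x"
  unfolding h_series_def gadget_series_def by (simp add: sum_distrib_left)

context gadget_replacement
begin

lemma uniform_growth_bound_tilde:
  assumes mu: "1 \<le> \<mu>" and up: "uniform_growth_bound V E \<mu>" and xc: "0 < xc" "xc \<le> 1"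
    and below: "\<And>x. 0 \<le> x \<Longrightarrow> x < xc \<Longrightarrow> h_series (gadget_paths Vg Eg p) x < inverse (\<mu>\<^sup>2)"
  shows "uniform_growth_bound tV tE (1 / xc)"
  unfolding uniform_growth_bound_def
proof (intro allI impI)
  fix \<epsilon> :: real assume \<epsilon>: "0 < \<epsilon>"
  define x where "x = 1 / (1 / xc + \<epsilon>)"
  have "x = xc / (1 + \<epsilon> * xc)" "1 < 1 + \<epsilon> * xc"
    using xc \<epsilon> unfolding x_def by (simp_all add: field_simps)
  then have x: "0 < x" "x < xc" using xc by (simp_all add: divide_less_eq)
  obtain M where M: "\<And>u n. saw_count tV tE u n * x ^ n \<le> M"
    using tilde_saw_count_weighted_bounded[OF mu up _ _ below] x xc by (meson less_imp_le order_trans)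
  have "saw_count tV tE u j \<le> M * (1 / xc + \<epsilon>) ^ j" for u j
  proof -
    have "0 < 1 / xc + \<epsilon>" using xc \<epsilon> by (simp add: add_pos_pos)
    then have "x * (1 / xc + \<epsilon>) = 1" unfolding x_def by simp
    then have "x ^ j * (1 / xc + \<epsilon>) ^ j = 1" by (simp flip: power_mult_distrib)
    then show ?thesis
      using mult_right_mono[OF M[where u=u and n=j], of "(1 / xc + \<epsilon>) ^ j"] xc \<epsilon> by (simp add: mult.assoc)
  qed
  then show "\<exists>C. \<forall>u\<in>tV. \<forall>j. saw_count tV tE u j \<le> C * (1 / xc + \<epsilon>) ^ j" by blast
qed

lemma growth_lower_bound_tilde_white:
  assumes mu: "1 \<le> \<mu>" and low: "growth_lower_bound V E \<mu> w" and w: "w \<in> V" "\<not> chi w"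
    and xc: "0 < xc" "h_series (gadget_paths Vg Eg p) xc = inverse (\<mu>\<^sup>2)"
    and up_tilde: "uniform_growth_bound tV tE (1 / xc)"
  shows "growth_lower_bound tV tE (1 / xc) (Inl w)"
proof -
  let ?GP = "gadget_paths Vg Eg p"
  have "0 < (1::real)" "0 \<le> 1 / xc" using xc by auto
  then obtain C where C: "1 \<le> C" "\<And>u j. saw_count tV tE u j \<le> C * (1 / xc + 1) ^ j"
    using uniform_growth_boundE[OF up_tilde] by blast
  have lengths: "\<forall>xs\<in>?GP. length xs + 1 \<le> card Vg + 1"
    unfolding gadget_paths_eq paths_between_def
    by (auto intro: card_mono[OF finite_Vg] simp flip: distinct_card)
  have "p 0 \<noteq> p 1" using port_inj[of 0 1] by auto
  then have "\<forall>xs\<in>?GP. 2 \<le> length xs"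
    unfolding gadget_paths_eq paths_between_def by (auto simp: Suc_le_eq neq_Nil_conv split: if_splits)
  then show ?thesis
    unfolding growth_lower_bound_def
  proof (intro lower_growth_from_h_powers[OF mu xc(1)])
    show "saw_count V E w (2 * m) * h_power_coeff ?GP m n \<le> saw_count tV tE (Inl w) n" for m n
      by (rule saw_count_mul_h_power_coeff_le[OF w])
    show "saw_count tV tE (Inl w) (N + t) \<le> saw_count tV tE (Inl w) N * (C * (1 / xc + 1) ^ t)" for N t
      by (rule saw_count_submult[OF simple_graph_tilde locally_finite_tilde C(2)])
    have "finite ?GP" unfolding gadget_paths_eq by (rule finite_paths_between[OF finite_Vg])
    from h_power_coeff_generating[OF this lengths order_refl] xc(2)
    show "(\<Sum>n\<le>m * (card Vg + 1). h_power_coeff ?GP m n * xc ^ n) = inverse (\<mu>\<^sup>2) ^ m" for m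
      by simp
  qed (use low C xc in \<open>auto simp: growth_lower_bound_def h_power_coeff_nonneg h_power_coeff_power
      h_power_coeff_eq_0\<close>)
qed

end

context gadget_replacement
begin

lemma exists_white_vertex:
  assumes "v \<in> V"
  obtains w where "w \<in> V" "\<not> chi w"
proof (cases "chi v")
  case True
  then have "card (nbrs E v) = 3" using deg3 assms by blast
  then obtain w where "w \<in> nbrs E v" by (metis card.empty ex_in_conv zero_neq_numeral)
  then have "E v w" unfolding nbrs_def by simp
  then have "w \<in> V" "\<not> chi w" using edge_colours[of v w] True simple_graph_in_verts[OF sg] by auto
  then show thesis by (rule that)
next
  case False
  with assms show thesis by (rule that)
qed

lemma tilde_connective_constant:
  assumes mu: "1 \<le> \<mu>" and up: "uniform_growth_bound V E \<mu>" and low: "\<forall>v\<in>V. growth_lower_bound V E \<mu> v"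
    and w: "w \<in> V" "\<not> chi w" and con: "graph_connected tV tE"
  obtains xc where "has_connective_constant tV tE (1 / xc)" "h_series (gadget_paths Vg Eg p) xc = inverse (\<mu>\<^sup>2)"
proof -
  let ?GP = "gadget_paths Vg Eg p"
  have fin: "finite ?GP" unfolding gadget_paths_eq by (rule finite_paths_between[OF finite_Vg])
  have ne: "?GP \<noteq> {}" by (rule gadget_paths_nonempty[OF lt])
  have "1 \<le> \<mu>\<^sup>2" using mu by (simp add: one_le_power)
  then have "inverse (\<mu>\<^sup>2) \<le> 1" by (simp add: inverse_le_1_iff)
  moreover have "1 \<le> real (card ?GP)" using fin ne by (simp add: Suc_le_eq card_gt_0_iff)
  ultimately have "inverse (\<mu>\<^sup>2) \<le> real (card ?GP)" by linarith
  moreover have "0 < inverse (\<mu>\<^sup>2)" using mu by simp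
  ultimately obtain xc where xc: "0 < xc" "xc \<le> 1" "h_series ?GP xc = inverse (\<mu>\<^sup>2)"
    and below: "\<And>x. 0 \<le> x \<Longrightarrow> x < xc \<Longrightarrow> h_series ?GP x < inverse (\<mu>\<^sup>2)"
    using h_series_root[OF fin ne] by blast
  have up_tilde: "uniform_growth_bound tV tE (1 / xc)"
    by (rule uniform_growth_bound_tilde[OF mu up xc(1,2) below])
  have "1 \<le> 1 / xc" using xc by simp
  moreover have "growth_lower_bound tV tE (1 / xc) (Inl w)"
    using growth_lower_bound_tilde_white[OF mu _ w xc(1,3) up_tilde] low w by blast
  ultimately have "\<forall>v\<in>tV. growth_lower_bound tV tE (1 / xc) v"
    using growth_lower_bound_connected[OF simple_graph_tilde locally_finite_tilde _ up_tilde con, of "Inl w"] w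
    by simp
  with \<open>1 \<le> 1 / xc\<close> up_tilde have "has_connective_constant tV tE (1 / xc)"
    by (rule has_connective_constant_if_growth_bounds)
  then show thesis using xc(3) by (rule that)
qed

end

theorem theorem3p5:
  fixes V :: "'a set" and E :: "'a \<Rightarrow> 'a \<Rightarrow> bool" and chi :: "'a \<Rightarrow> bool"
    and Vg :: "'c set" and Eg :: "'c \<Rightarrow> 'c \<Rightarrow> bool" and p :: "nat \<Rightarrow> 'c"
    and att :: "'a \<Rightarrow> 'a \<Rightarrow> nat"
  assumes "simple_graph V E" and "infinite V" and "graph_connected V E"
    and "locally_finite V E"
    and "bipartite_colouring V E chi"
    and "coloured_quasi_transitive V E chi"
    and "\<forall>v\<in>V. chi v \<longrightarrow> card (nbrs E v) = 3"
    and "local_transformation Vg Eg p"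
    and "\<forall>b\<in>V. chi b \<longrightarrow> bij_betw (att b) (nbrs E b) {0,1,2}"
    and "graph_connected (tilde_V V chi Vg) (tilde_E V E chi Eg p att)"
  shows "\<exists>\<mu> \<mu>t. has_connective_constant V E \<mu> \<and>
           has_connective_constant (tilde_V V chi Vg) (tilde_E V E chi Eg p att) \<mu>t \<and>
           inverse (\<mu> ^ 2) = inverse \<mu>t * gadget_series Vg Eg p (inverse \<mu>t)"
proof -
  interpret gadget_replacement V E chi Vg Eg p att
    using assms by unfold_locales
  obtain \<mu> where mu: "1 \<le> \<mu>" "uniform_growth_bound V E \<mu>" "\<forall>v\<in>V. growth_lower_bound V E \<mu> v"
    using quasi_transitive_growth_bounds[OF assms(1-4,6)] by blast
  obtain v where "v \<in> V" using assms(2) by (metis ex_in_conv finite.emptyI)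
  then obtain w where "w \<in> V" "\<not> chi w" by (rule exists_white_vertex)
  then obtain xc where tilde: "has_connective_constant tV tE (1 / xc)"
    and xc: "h_series (gadget_paths Vg Eg p) xc = inverse (\<mu>\<^sup>2)"
    using tilde_connective_constant[OF mu] assms(10) by blast
  have "inverse (\<mu> ^ 2) = inverse (1 / xc) * gadget_series Vg Eg p (inverse (1 / xc))"
    using xc by (simp add: h_series_gadget_paths)
  with has_connective_constant_if_growth_bounds[OF mu] tilde show ?thesis by blast
qed

end
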